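(* Let $d\in\{1,2\}$, and set $a_{N,1}=(c^2_{N,1}N^{1/2})^{-1/2}$ and $a_{N,2}=(c^2_{N,2}\log N)^{-1/2}$. Let $R_N=Z(N)-1-\sum_{k=1}^N f_k$, where $f_k=c_{N,d}\sum_{x\in\mathbb{Z}^d}h(k,x)p_0(k,x)$. Then $a_{N,d}R_N\Rightarrow 0$ as $N\to\infty$ (convergence in distribution under $Q$).
   Context: For $N\ge1$, $P^N_0$ is the uniform probability measure on nearest-neighbour walks $\omega:\{0,\dots,N\}\to\mathbb{Z}^d$ with $\omega(0)=0$, $|\omega(n)-\omega(n-1)|=1$; $p_0(n,x)$ is the probability that simple random walk started at $0$ is at $x$ at time $n$. The environment $h=\{h(n,x)\}$ is i.i.d. with $h(n,x)=\pm1$ each with probability $1/2$ on $(H,\mathcal{G},Q)$, independent of the walk. $(c_{N,d})$ is a sequence of positive numbers with $\lim_{N\to\infty}c_{N,1}^2N^{1/2}=0$ for $d=1$ and $\lim_{N\to\infty}c_{N,2}^2\log N=0$ for $d=2$. $Z(N)=\int\prod_{n=1}^N[1+c_{N,d}h(n,\omega(n))]\,dP^N_0(\omega)$. *)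

theory Defs
  imports "HOL-Probability.Probability"
begin

text \<open>Points of Z^d are integer lists of length d. Nearest neighbours: l1-distance 1.\<close>
definition nn :: "nat \<Rightarrow> int list \<Rightarrow> int list \<Rightarrow> bool" where
  "nn d x y \<longleftrightarrow> length x = d \<and> length y = d \<and> (\<Sum>i<d. \<bar>x ! i - y ! i\<bar>) = 1"

text \<open>Nearest-neighbour walks omega(0),...,omega(N) in Z^d started at the origin,
  represented as lists of length N+1 (entry n is omega(n)).\<close>
definition walks :: "nat \<Rightarrow> nat \<Rightarrow> int list list set" where
  "walks d N = {w. length w = N + 1 \<and> w ! 0 = replicate d 0 \<and>
                   (\<forall>n\<in>{1..N}. nn d (w ! (n - 1)) (w ! n))}"

definition P0 :: "nat \<Rightarrow> nat \<Rightarrow> int list list pmf" where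
  "P0 d N = pmf_of_set (walks d N)"

definition p0 :: "nat \<Rightarrow> nat \<Rightarrow> int list \<Rightarrow> real" where
  "p0 d n x = measure_pmf.prob (P0 d n) {w. w ! n = x}"

definition Zpart :: "nat \<Rightarrow> (nat \<Rightarrow> real) \<Rightarrow> (nat \<Rightarrow> int list \<Rightarrow> 'w \<Rightarrow> real) \<Rightarrow> nat \<Rightarrow> 'w \<Rightarrow> real" where
  "Zpart d c h N \<omega> = measure_pmf.expectation (P0 d N)
       (\<lambda>w. \<Prod>n\<in>{1..N}. (1 + c N * h n (w ! n) \<omega>))"

definition fk :: "nat \<Rightarrow> (nat \<Rightarrow> real) \<Rightarrow> (nat \<Rightarrow> int list \<Rightarrow> 'w \<Rightarrow> real) \<Rightarrow> nat \<Rightarrow> nat \<Rightarrow> 'w \<Rightarrow> real" where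
  "fk d c h N k \<omega> = c N * (\<Sum>\<^sub>\<infinity>x\<in>{x::int list. length x = d}. h k x \<omega> * p0 d k x)"

definition RN :: "nat \<Rightarrow> (nat \<Rightarrow> real) \<Rightarrow> (nat \<Rightarrow> int list \<Rightarrow> 'w \<Rightarrow> real) \<Rightarrow> nat \<Rightarrow> 'w \<Rightarrow> real" where
  "RN d c h N \<omega> = Zpart d c h N \<omega> - 1 - (\<Sum>k\<in>{1..N}. fk d c h N k \<omega>)"

definition aN :: "nat \<Rightarrow> (nat \<Rightarrow> real) \<Rightarrow> nat \<Rightarrow> real" where
  "aN d c N = (if d = 1 then ((c N)\<^sup>2 * real N powr (1/2)) powr (-1/2)
               else ((c N)\<^sup>2 * ln (real N)) powr (-1/2))"

end

theory Submission
  imports Defs "HOL-Analysis.Harmonic_Numbers"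
begin

text \<open>
  Expanding the product in Z(N) over the subsets A of {1..N} gives a chaos expansion whose terms
  with |A| = 0 and |A| = 1 are 1 and the f_k, so R_N is the part with |A| >= 2. Products of the
  signs over distinct finite sets of space-time points are orthonormal in L^2(Q), hence E_Q[R_N^2]
  is the sum over |A| >= 2 of c^(2|A|) times the probability that two independent walks agree at
  all times in A. Splitting A at its first element and using the Markov property turns this into a
  renewal series, bounded by x^2 / (1 - x) where x is c^2 times the expected number of meetings of
  the two walks up to time N. The meeting probability at time a is binom(2a, a) / 4^a <= a^(-1/2)
  for d = 1 and its square for d = 2 (in the coordinates x + y, x - y the planar walk is a pair of
  independent walks on Z), so x = O(a_N^(-2)) and E_Q[(a_N R_N)^2] = O(a_N^(-2)) -> 0; Chebyshev's
  inequality finishes the proof.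
\<close>

section \<open>Nearest-neighbour walks as an iterated random step\<close>

definition vadd :: "int list \<Rightarrow> int list \<Rightarrow> int list" where
  "vadd x y = map2 (+) x y"

definition unit_steps :: "nat \<Rightarrow> int list set" where
  "unit_steps d = (if d = 1 then {[1], [-1]} else {[1, 0], [-1, 0], [0, 1], [0, -1]})"

lemma length_vadd [simp]: "length (vadd x y) = min (length x) (length y)"
  by (simp add: vadd_def)

lemma nth_vadd [simp]: "i < length x \<Longrightarrow> i < length y \<Longrightarrow> vadd x y ! i = x ! i + y ! i"
  by (simp add: vadd_def)

lemma vadd_assoc:
  "length a = length b \<Longrightarrow> length b = length c \<Longrightarrow> vadd (vadd a b) c = vadd a (vadd b c)"
  by (rule nth_equalityI) auto

lemma vadd_left_cancel:
  assumes "length a = length b" "length b = length c"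
  shows "vadd a b = vadd a c \<longleftrightarrow> b = c"
proof
  assume eq: "vadd a b = vadd a c"
  show "b = c"
  proof (rule nth_equalityI)
    fix i assume "i < length b"
    then show "b ! i = c ! i" using arg_cong[OF eq, of "\<lambda>v. v ! i"] assms by simp
  qed (use assms in simp)
qed simp

lemma finite_unit_steps [simp]: "finite (unit_steps d)"
  and unit_steps_nonempty [simp]: "unit_steps d \<noteq> {}"
  by (simp_all add: unit_steps_def)

lemma length_unit_step: "d \<in> {1, 2} \<Longrightarrow> s \<in> unit_steps d \<Longrightarrow> length s = d"
  by (auto simp: unit_steps_def)

lemma Collect_nn_eq_vadd_image:
  assumes d: "d \<in> {1, 2}" and x: "length x = d"
  shows "{y. nn d x y} = vadd x ` unit_steps d"
proof (cases "d = 1")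
  case True
  then obtain a where xa: "x = [a]" using x by (auto simp: length_Suc_conv)
  have "nn d x y \<longleftrightarrow> y = [a + 1] \<or> y = [a - 1]" for y
  proof
    assume "nn d x y"
    then obtain b where "y = [b]" "\<bar>a - b\<bar> = 1"
      using True xa by (auto simp: nn_def length_Suc_conv)
    then show "y = [a + 1] \<or> y = [a - 1]" by auto
  qed (auto simp: nn_def True xa)
  then show ?thesis using True xa by (auto simp: unit_steps_def vadd_def)
next
  case False
  then have d2: "d = 2" using d by auto
  then obtain a b where xa: "x = [a, b]" using x by (auto simp: length_Suc_conv numeral_2_eq_2)
  have "nn d x y \<longleftrightarrow> y = [a + 1, b] \<or> y = [a - 1, b] \<or> y = [a, b + 1] \<or> y = [a, b - 1]" for y
  proof
    assume "nn d x y"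
    then obtain e f where "y = [e, f]" "\<bar>a - e\<bar> + \<bar>b - f\<bar> = 1"
      using d2 xa by (auto simp: nn_def length_Suc_conv numeral_2_eq_2 lessThan_Suc)
    then show "y = [a + 1, b] \<or> y = [a - 1, b] \<or> y = [a, b + 1] \<or> y = [a, b - 1]" by auto
  qed (auto simp: nn_def d2 xa numeral_2_eq_2 lessThan_Suc)
  then show ?thesis using d2 xa by (auto simp: unit_steps_def vadd_def)
qed

lemma walks_0: "walks d 0 = {[replicate d 0]}"
  by (auto simp: walks_def length_Suc_conv)

lemma length_walk: "w \<in> walks d N \<Longrightarrow> length w = Suc N"
  by (simp add: walks_def)

lemma length_walk_point:
  assumes w: "w \<in> walks d N" and x: "x \<in> set w"
  shows "length x = d"
proof -
  obtain i where i: "i < length w" "x = w ! i" using x by (auto simp: in_set_conv_nth)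
  show ?thesis
  proof (cases i)
    case 0 then show ?thesis using w i by (auto simp: walks_def)
  next
    case (Suc k)
    then have "i \<in> {1..N}" using w i by (auto simp: walks_def)
    then have "nn d (w ! (i - 1)) (w ! i)" using w by (auto simp: walks_def)
    then show ?thesis using i by (simp add: nn_def)
  qed
qed

lemma length_walk_nth: "w \<in> walks d N \<Longrightarrow> n \<le> N \<Longrightarrow> length (w ! n) = d"
  using length_walk_point[of w d N "w ! n"] by (simp add: length_walk)

lemma last_walk: "w \<in> walks d N \<Longrightarrow> last w = w ! N"
  by (metis diff_Suc_1 last_conv_nth length_walk list.size(3) nat.distinct(1))

lemma length_walk_last: "w \<in> walks d N \<Longrightarrow> length (last w) = d"
  by (simp add: last_walk length_walk_nth)

lemma walks_Suc:
  "walks d (Suc N) = (\<Union>u\<in>walks d N. (\<lambda>y. u @ [y]) ` {y. nn d (last u) y})"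
proof (intro equalityI subsetI)
  fix w assume w: "w \<in> walks d (Suc N)"
  define u where "u = butlast w"
  have lw: "length w = N + 2" using w by (simp add: walks_def)
  then have wu: "w = u @ [last w]"
    unfolding u_def by (metis append_butlast_last_id list.size(3) add_2_eq_Suc' nat.distinct(1))
  have lu: "length u = N + 1" using lw by (simp add: u_def)
  have u_nth: "n \<le> N \<Longrightarrow> u ! n = w ! n" for n
    using wu lu by (metis Suc_eq_plus1 le_imp_less_Suc nth_append)
  have "Suc N \<in> {1..Suc N}" by simp
  then have "nn d (w ! N) (w ! Suc N)" using w unfolding walks_def by fastforce
  moreover have "u \<noteq> []" "w \<noteq> []" using lu lw by auto
  ultimately have "nn d (last u) (last w)"
    using lu lw u_nth[of N] by (simp add: last_conv_nth)
  moreover have "u \<in> walks d N" using w lu u_nth unfolding walks_def by auto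
  ultimately show "w \<in> (\<Union>u\<in>walks d N. (\<lambda>y. u @ [y]) ` {y. nn d (last u) y})"
    using wu by blast
next
  fix w assume "w \<in> (\<Union>u\<in>walks d N. (\<lambda>y. u @ [y]) ` {y. nn d (last u) y})"
  then obtain u y where u: "u \<in> walks d N" and y: "nn d (last u) y" and w: "w = u @ [y]" by auto
  have lu: "length u = N + 1" using u by (simp add: walks_def)
  show "w \<in> walks d (Suc N)" unfolding walks_def
  proof (intro CollectI conjI ballI)
    show "length w = Suc N + 1" using lu w by simp
    show "w ! 0 = replicate d 0" using u lu w by (simp add: walks_def nth_append)
    fix n assume n: "n \<in> {1..Suc N}"
    show "nn d (w ! (n - 1)) (w ! n)"
    proof (cases "n = Suc N")
      case True
      then show ?thesis using y lu w last_walk[OF u] by (simp add: nth_append)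
    next
      case False
      then show ?thesis using n u lu w by (auto simp: walks_def nth_append)
    qed
  qed
qed

lemma finite_walks: "d \<in> {1, 2} \<Longrightarrow> finite (walks d N) \<and> walks d N \<noteq> {}"
proof (induction N)
  case (Suc N)
  then obtain u where "u \<in> walks d N" by auto
  then show ?case using Suc
    by (auto simp: walks_Suc Collect_nn_eq_vadd_image length_walk_last)
qed (simp add: walks_0)

notation bind_pmf (infixl "\<bind>\<^sub>P" 54)

text \<open>A step-by-step construction of \<open>P0\<close>, which makes its Markov property available.\<close>

fun walk_pmf :: "nat \<Rightarrow> nat \<Rightarrow> int list list pmf" where
  "walk_pmf d 0 = return_pmf [replicate d 0]"
| "walk_pmf d (Suc N) = walk_pmf d N \<bind>\<^sub>P
     (\<lambda>w. map_pmf (\<lambda>s. w @ [vadd (last w) s]) (pmf_of_set (unit_steps d)))"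

lemma P0_eq_walk_pmf:
  assumes d: "d \<in> {1, 2}"
  shows "P0 d N = walk_pmf d N"
proof (induction N)
  case 0 then show ?case by (simp add: P0_def walks_0 pmf_of_set_singleton)
next
  case (Suc N)
  let ?ext = "\<lambda>u s. u @ [vadd (last u) s]"
  have fw: "finite (walks d N)" "walks d N \<noteq> {}" using finite_walks[OF d] by auto
  have inj: "inj_on (?ext u) (unit_steps d)" if "u \<in> walks d N" for u
    using vadd_left_cancel[of "last u"] length_walk_last[OF that] length_unit_step[OF d]
    by (auto simp: inj_on_def)
  have "walks d (Suc N) = (\<Union>u\<in>walks d N. ?ext u ` unit_steps d)"
    unfolding walks_Suc using Collect_nn_eq_vadd_image[OF d length_walk_last] by (auto cong: SUP_cong)
  then have "P0 d (Suc N) = pmf_of_set (\<Union>u\<in>walks d N. ?ext u ` unit_steps d)"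
    by (simp add: P0_def)
  also have "\<dots> = pmf_of_set (walks d N) \<bind>\<^sub>P (\<lambda>u. pmf_of_set (?ext u ` unit_steps d))"
  proof (rule pmf_of_set_UN)
    show "card (?ext u ` unit_steps d) = card (unit_steps d)" if "u \<in> walks d N" for u
      using card_image[OF inj[OF that]] .
  qed (use fw in \<open>auto simp: disjoint_family_on_def\<close>)
  also have "\<dots> = walk_pmf d (Suc N)"
    unfolding walk_pmf.simps Suc.IH[symmetric] P0_def
    by (intro bind_pmf_cong refl map_pmf_of_set_inj[symmetric] inj)
       (auto simp: set_pmf_of_set[OF fw(2,1)])
  finally show ?case .
qed

lemma set_pmf_walk_pmf: "d \<in> {1, 2} \<Longrightarrow> set_pmf (walk_pmf d N) = walks d N"
  using finite_walks by (simp add: P0_eq_walk_pmf[symmetric] P0_def)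

section \<open>Markov property of the walk\<close>

definition concat_walks :: "int list list \<Rightarrow> int list list \<Rightarrow> int list list" where
  "concat_walks u v = u @ map (vadd (last u)) (tl v)"

lemma nth_concat_walks_low: "length u = Suc a \<Longrightarrow> n \<le> a \<Longrightarrow> concat_walks u v ! n = u ! n"
  by (simp add: concat_walks_def nth_append)

lemma nth_concat_walks_high:
  assumes "length u = Suc a" "length v = Suc j" "a < n" "n \<le> a + j"
  shows "concat_walks u v ! n = vadd (last u) (v ! (n - a))"
proof -
  have "Suc (n - Suc a) = n - a" using \<open>a < n\<close> by simp
  then show ?thesis using assms by (simp add: concat_walks_def nth_append nth_tl)
qed

lemma last_concat_walks:
  assumes u: "u \<in> walks d m" and v: "v \<in> walks d j"
  shows "last (concat_walks u v) = vadd (last u) (last v)"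
proof (cases j)
  case 0
  then have "v = [replicate d 0]" using v by (simp add: walks_0)
  then show ?thesis using length_walk_last[OF u] by (auto simp: concat_walks_def intro: nth_equalityI)
next
  case (Suc j')
  then have "tl v \<noteq> []" using length_walk[OF v] by (cases v) auto
  then show ?thesis using v by (auto simp: concat_walks_def last_map last_tl walks_def)
qed

lemma walk_pmf_add:
  assumes d: "d \<in> {1, 2}"
  shows "walk_pmf d (m + j) = walk_pmf d m \<bind>\<^sub>P (\<lambda>u. map_pmf (concat_walks u) (walk_pmf d j))"
proof (induction j)
  case 0
  have "walk_pmf d m \<bind>\<^sub>P (\<lambda>u. map_pmf (concat_walks u) (walk_pmf d 0)) = walk_pmf d m \<bind>\<^sub>P return_pmf"
    by (intro bind_pmf_cong) (auto simp: concat_walks_def)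
  then show ?case by (simp add: bind_return_pmf')
next
  case (Suc j)
  let ?S = "pmf_of_set (unit_steps d)"
  have "walk_pmf d (m + Suc j) = walk_pmf d m \<bind>\<^sub>P (\<lambda>u. walk_pmf d j \<bind>\<^sub>P
      (\<lambda>v. map_pmf (\<lambda>s. concat_walks u v @ [vadd (last (concat_walks u v)) s]) ?S))"
    using Suc by (simp only: add_Suc_right walk_pmf.simps bind_assoc_pmf bind_map_pmf)
  also have "\<dots> = walk_pmf d m \<bind>\<^sub>P (\<lambda>u. walk_pmf d j \<bind>\<^sub>P
      (\<lambda>v. map_pmf (\<lambda>s. concat_walks u (v @ [vadd (last v) s])) ?S))"
  proof (intro bind_pmf_cong refl map_pmf_cong)
    fix u v s
    assume "u \<in> set_pmf (walk_pmf d m)" "v \<in> set_pmf (walk_pmf d j)" "s \<in> set_pmf ?S"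
    then have u: "u \<in> walks d m" and v: "v \<in> walks d j" and s: "s \<in> unit_steps d"
      by (simp_all add: set_pmf_walk_pmf[OF d])
    have "v \<noteq> []" using length_walk[OF v] by auto
    then show "concat_walks u v @ [vadd (last (concat_walks u v)) s] = concat_walks u (v @ [vadd (last v) s])"
      unfolding last_concat_walks[OF u v]
      using length_walk_last[OF u] length_walk_last[OF v] length_unit_step[OF d s]
      by (simp add: concat_walks_def vadd_assoc)
  qed
  also have "\<dots> = walk_pmf d m \<bind>\<^sub>P (\<lambda>u. map_pmf (concat_walks u) (walk_pmf d (Suc j)))"
    by (simp add: map_bind_pmf map_pmf_comp)
  finally show ?case .
qed

lemma map_take_walk_pmf:
  assumes d: "d \<in> {1, 2}" and k: "k \<le> N"
  shows "map_pmf (take (Suc k)) (walk_pmf d N) = walk_pmf d k"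
proof -
  have "map_pmf (take (Suc k)) (walk_pmf d N) =
      walk_pmf d k \<bind>\<^sub>P (\<lambda>u. map_pmf (take (Suc k) \<circ> concat_walks u) (walk_pmf d (N - k)))"
    using walk_pmf_add[OF d, of k "N - k"] k by (simp add: map_bind_pmf pmf.map_comp)
  also have "\<dots> = walk_pmf d k \<bind>\<^sub>P return_pmf"
  proof (intro bind_pmf_cong refl)
    fix u assume "u \<in> set_pmf (walk_pmf d k)"
    then have "length u = Suc k" by (simp add: set_pmf_walk_pmf[OF d] length_walk)
    then have "take (Suc k) \<circ> concat_walks u = (\<lambda>_. u)" by (simp add: concat_walks_def fun_eq_iff)
    then show "map_pmf (take (Suc k) \<circ> concat_walks u) (walk_pmf d (N - k)) = return_pmf u"
      by (simp add: map_pmf_const)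
  qed
  finally show ?thesis by (simp add: bind_return_pmf')
qed

lemma map_nth_walk_pmf:
  assumes "d \<in> {1, 2}" "k \<le> N"
  shows "map_pmf (\<lambda>w. w ! k) (walk_pmf d N) = map_pmf (\<lambda>w. w ! k) (walk_pmf d k)"
proof -
  have "map_pmf (\<lambda>w. w ! k) (walk_pmf d N) = map_pmf (\<lambda>w. w ! k) (map_pmf (take (Suc k)) (walk_pmf d N))"
    by (simp add: map_pmf_comp)
  then show ?thesis by (simp add: map_take_walk_pmf[OF assms])
qed

section \<open>Collision probabilities of two independent walks\<close>

definition collision_prob :: "nat \<Rightarrow> nat \<Rightarrow> nat set \<Rightarrow> real" where
  "collision_prob d N A = measure_pmf.prob (pair_pmf (walk_pmf d N) (walk_pmf d N))
     {p. \<forall>n\<in>A. fst p ! n = snd p ! n}"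

definition tail_shift :: "nat set \<Rightarrow> nat set" where
  "tail_shift A = (\<lambda>n. n - Min A) ` (A - {Min A})"

lemma collision_prob_empty [simp]: "collision_prob d N {} = 1"
  and collision_prob_nonneg: "collision_prob d N A \<ge> 0"
  by (simp_all add: collision_prob_def)

lemma bind_map_pmf_eq_map_pair_pmf:
  "A \<bind>\<^sub>P (\<lambda>u. map_pmf (f u) B) = map_pmf (case_prod f) (pair_pmf A B)"
  by (simp add: pair_pmf_def map_bind_pmf map_pmf_def bind_assoc_pmf bind_return_pmf)

lemma pair_pair_pmf_swap_middle:
  "pair_pmf (pair_pmf A B) (pair_pmf C E) =
   map_pmf (\<lambda>((a, c), (b, e)). ((a, b), (c, e))) (pair_pmf (pair_pmf A C) (pair_pmf B E))"
proof (rule pmf_eqI)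
  fix z :: "('a \<times> 'b) \<times> ('c \<times> 'd)"
  obtain a b c e where z: "z = ((a, b), (c, e))" by (metis prod.collapse)
  have inj: "inj (\<lambda>((a::'a, c::'c), (b::'b, e::'d)). ((a, b), (c, e)))" by (auto simp: inj_def)
  have "z = (\<lambda>((a, c), (b, e)). ((a, b), (c, e))) ((a, c), (b, e))" by (simp add: z)
  then have "pmf (map_pmf (\<lambda>((a, c), (b, e)). ((a, b), (c, e))) (pair_pmf (pair_pmf A C) (pair_pmf B E))) z
     = pmf (pair_pmf (pair_pmf A C) (pair_pmf B E)) ((a, c), (b, e))"
    using pmf_map_inj'[OF inj] by metis
  then show "pmf (pair_pmf (pair_pmf A B) (pair_pmf C E)) z =
      pmf (map_pmf (\<lambda>((a, c), (b, e)). ((a, b), (c, e))) (pair_pmf (pair_pmf A C) (pair_pmf B E))) z"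
    by (simp add: z pmf_pair)
qed

lemma measure_pmf_prob_cong_set_pmf:
  assumes "\<And>x. x \<in> set_pmf M \<Longrightarrow> x \<in> X \<longleftrightarrow> x \<in> Y"
  shows "measure_pmf.prob M X = measure_pmf.prob M Y"
proof -
  have "X \<inter> set_pmf M = Y \<inter> set_pmf M" using assms by auto
  then show ?thesis by (metis measure_Int_set_pmf)
qed

lemma concat_walks_agree_iff:
  assumes u: "u \<in> walks d a" "u' \<in> walks d a" and v: "v \<in> walks d j" "v' \<in> walks d j"
    and A: "a \<in> A" "\<And>n. n \<in> A \<Longrightarrow> a \<le> n \<and> n \<le> a + j"
  shows "(\<forall>n\<in>A. concat_walks u v ! n = concat_walks u' v' ! n) \<longleftrightarrow>
         u ! a = u' ! a \<and> (\<forall>m\<in>(\<lambda>n. n - a) ` (A - {a}). v ! m = v' ! m)"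
proof -
  have len: "length u = Suc a" "length u' = Suc a" "length v = Suc j" "length v' = Suc j"
    using u v by (simp_all add: length_walk)
  have last_u: "last u = u ! a" "last u' = u' ! a" using u by (simp_all add: last_walk)
  have high: "concat_walks u v ! n = concat_walks u' v' ! n \<longleftrightarrow> v ! (n - a) = v' ! (n - a)"
    if "u ! a = u' ! a" "n \<in> A" "n \<noteq> a" for n
  proof -
    have n: "a < n" "n \<le> a + j" using A(2)[OF that(2)] that(3) by auto
    have "length (v ! (n - a)) = d" "length (v' ! (n - a)) = d" "length (u ! a) = d"
      using n length_walk_nth[OF v(1)] length_walk_nth[OF v(2)] length_walk_nth[OF u(1)] by auto
    then show ?thesis
      using nth_concat_walks_high[OF len(1,3) n] nth_concat_walks_high[OF len(2,4) n]
        vadd_left_cancel[of "u ! a"] last_u that(1) by auto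
  qed
  have low: "concat_walks u v ! a = concat_walks u' v' ! a \<longleftrightarrow> u ! a = u' ! a"
    using nth_concat_walks_low[OF len(1), of a v] nth_concat_walks_low[OF len(2), of a v'] by simp
  show ?thesis
  proof (cases "u ! a = u' ! a")
    case True
    have "(\<forall>n\<in>A - {a}. concat_walks u v ! n = concat_walks u' v' ! n) \<longleftrightarrow>
        (\<forall>n\<in>A - {a}. v ! (n - a) = v' ! (n - a))"
      using high[OF True] by simp
    moreover have "(\<forall>n\<in>A. concat_walks u v ! n = concat_walks u' v' ! n) \<longleftrightarrow>
        (\<forall>n\<in>A - {a}. concat_walks u v ! n = concat_walks u' v' ! n)"
      using A(1) low True by blast
    ultimately show ?thesis using True by simp
  qed (use low A(1) in blast)
qed

lemma collision_prob_split_Min: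
  assumes d: "d \<in> {1, 2}" and A: "finite A" "A \<noteq> {}" "A \<subseteq> {1..N}"
  shows "collision_prob d N A =
    collision_prob d (Min A) {Min A} * collision_prob d (N - Min A) (tail_shift A)"
proof -
  define a where "a = Min A"
  define j where "j = N - a"
  have aA: "a \<in> A" and a_min: "\<And>n. n \<in> A \<Longrightarrow> a \<le> n" using A by (simp_all add: a_def)
  have N: "N = a + j" using aA A by (auto simp: j_def)
  let ?W = "\<lambda>n. walk_pmf d n" and ?F = "\<lambda>((u, u'), (v, v')). (concat_walks u v, concat_walks u' v')"
  have "pair_pmf (?W N) (?W N) = map_pmf ?F (pair_pmf (pair_pmf (?W a) (?W a)) (pair_pmf (?W j) (?W j)))"
    unfolding N walk_pmf_add[OF d] bind_map_pmf_eq_map_pair_pmf map_pair[symmetric]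
    by (subst pair_pair_pmf_swap_middle) (simp add: pmf.map_comp o_def case_prod_unfold)
  then have "collision_prob d N A = measure_pmf.prob (pair_pmf (pair_pmf (?W a) (?W a)) (pair_pmf (?W j) (?W j)))
      (?F -` {p. \<forall>n\<in>A. fst p ! n = snd p ! n})"
    by (simp add: collision_prob_def)
  also have "\<dots> = measure_pmf.prob (pair_pmf (pair_pmf (?W a) (?W a)) (pair_pmf (?W j) (?W j)))
      ({p. \<forall>n\<in>{a}. fst p ! n = snd p ! n} \<times> {p. \<forall>n\<in>tail_shift A. fst p ! n = snd p ! n})"
  proof (rule measure_pmf_prob_cong_set_pmf)
    fix x assume "x \<in> set_pmf (pair_pmf (pair_pmf (?W a) (?W a)) (pair_pmf (?W j) (?W j)))"
    then obtain u u' v v' where "x = ((u, u'), (v, v'))" "u \<in> walks d a" "u' \<in> walks d a"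
        "v \<in> walks d j" "v' \<in> walks d j"
      by (auto simp: set_pmf_walk_pmf[OF d])
    moreover have "\<And>n. n \<in> A \<Longrightarrow> a \<le> n \<and> n \<le> a + j" using a_min A N by auto
    ultimately show "x \<in> ?F -` {p. \<forall>n\<in>A. fst p ! n = snd p ! n} \<longleftrightarrow>
        x \<in> {p. \<forall>n\<in>{a}. fst p ! n = snd p ! n} \<times> {p. \<forall>n\<in>tail_shift A. fst p ! n = snd p ! n}"
      using concat_walks_agree_iff[OF _ _ _ _ aA] by (simp add: tail_shift_def a_def)
  qed
  also have "\<dots> = collision_prob d a {a} * collision_prob d j (tail_shift A)"
    by (simp add: measure_pmf_prob_product collision_prob_def)
  finally show ?thesis by (simp add: a_def j_def)
qed

section \<open>Probability that two walks meet at a given time\<close>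

lemma central_binomial_Suc:
  "Suc j * ((2 * Suc j) choose Suc j) = 2 * (2 * j + 1) * ((2 * j) choose j)"
proof -
  have e: "2 * Suc j = Suc (2 * j + 1)" by simp
  have s: "(2 * j + 1) choose j = (2 * j + 1) choose Suc j"
    using binomial_symmetric[of j "2 * j + 1"] by simp
  have a: "Suc j * (Suc (2 * j + 1) choose Suc j) = Suc (2 * j + 1) * ((2 * j + 1) choose j)"
    by (rule Suc_times_binomial)
  have b: "Suc j * (Suc (2 * j) choose Suc j) = Suc (2 * j) * ((2 * j) choose j)"
    by (rule Suc_times_binomial)
  have "Suc j * ((2 * Suc j) choose Suc j) = Suc (2 * j + 1) * ((2 * j + 1) choose Suc j)"
    using a s e by (simp only:)
  then have "Suc j * (Suc j * ((2 * Suc j) choose Suc j)) =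
      Suc (2 * j + 1) * (Suc j * (Suc (2 * j) choose Suc j))"
    by (simp only: mult.left_commute Suc_eq_plus1)
  also have "\<dots> = Suc j * (2 * (2 * j + 1) * ((2 * j) choose j))"
    using b by (simp del: binomial_Suc_Suc add: algebra_simps)
  finally show ?thesis using mult_left_cancel[of "Suc j"] by blast
qed

definition central_prob :: "nat \<Rightarrow> real" where
  "central_prob j = real ((2 * j) choose j) / 4 ^ j"

lemma central_prob_Suc: "central_prob (Suc j) = central_prob j * (2 * j + 1) / (2 * j + 2)"
proof -
  define a where "a = (2 * Suc j) choose Suc j"
  define b where "b = (2 * j) choose j"
  have "real (Suc j * a) = real (2 * (2 * j + 1) * b)"
    using central_binomial_Suc unfolding a_def b_def by (simp only:)
  then have "real a = 2 * (2 * j + 1) * real b / (j + 1)"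
    by (simp only: of_nat_mult) (simp add: field_simps)
  then have "central_prob (Suc j) = (2 * (2 * j + 1) * real b / (j + 1)) / (4 * 4 ^ j)"
    by (simp add: central_prob_def a_def)
  also have "\<dots> = (real b / 4 ^ j) * (2 * j + 1) / (2 * j + 2)"
    by (simp add: divide_simps) (simp add: algebra_simps)
  finally show ?thesis by (simp add: central_prob_def b_def)
qed

text \<open>The bound \<open>1 / (3 j + 1)\<close> rather than \<open>1 / j\<close> is what propagates through the induction.\<close>

lemma central_prob_square_le: "(central_prob j)\<^sup>2 \<le> 1 / (3 * real j + 1)"
proof (induction j)
  case 0 then show ?case by (simp add: central_prob_def)
next
  case (Suc j)
  have "(central_prob (Suc j))\<^sup>2 = (central_prob j)\<^sup>2 * ((2 * j + 1) / (2 * j + 2))\<^sup>2"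
    by (simp add: central_prob_Suc power_mult_distrib power_divide)
  also have "\<dots> \<le> 1 / (3 * j + 1) * ((2 * j + 1) / (2 * j + 2))\<^sup>2"
    using Suc by (intro mult_right_mono) (auto simp: add.commute)
  also have "\<dots> \<le> 1 / (3 * real (Suc j) + 1)"
  proof -
    have "(2 * real j + 1)\<^sup>2 * (3 * j + 4) \<le> (2 * real j + 2)\<^sup>2 * (3 * j + 1)"
      by (simp add: power2_eq_square algebra_simps)
    then have "(2 * real j + 1)\<^sup>2 / ((3 * j + 1) * (2 * real j + 2)\<^sup>2) \<le> 1 / (3 * j + 4)"
      by (simp add: divide_simps mult.commute)
    then show ?thesis by (simp add: power_divide algebra_simps)
  qed
  finally show ?case .
qed

lemma central_prob_square_le_inverse:
  assumes "j > 0"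
  shows "(central_prob j)\<^sup>2 \<le> 1 / real j"
proof -
  have "1 / (3 * real j + 1) \<le> 1 / real j" using assms by (simp add: divide_simps)
  then show ?thesis using central_prob_square_le[of j] by linarith
qed

abbreviation fair_coin :: "bool pmf" where
  "fair_coin \<equiv> bernoulli_pmf (1 / 2)"

definition pm_one :: "bool \<Rightarrow> int" where
  "pm_one b = (if b then 1 else -1)"

definition srw_pmf :: "nat \<Rightarrow> int pmf" where
  "srw_pmf j = map_pmf (\<lambda>k. 2 * int k - int j) (binomial_pmf j (1 / 2))"

lemma srw_pmf_Suc: "srw_pmf (Suc j) = srw_pmf j \<bind>\<^sub>P (\<lambda>u. map_pmf (\<lambda>b. u + pm_one b) fair_coin)"
proof -
  have "srw_pmf (Suc j) = fair_coin \<bind>\<^sub>P (\<lambda>b. binomial_pmf j (1 / 2) \<bind>\<^sub>P (\<lambda>k.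
          return_pmf (2 * int ((if b then 1 else 0) + k) - int (Suc j))))"
    unfolding srw_pmf_def by (subst binomial_pmf_Suc) (auto simp: map_bind_pmf)
  also have "\<dots> = binomial_pmf j (1 / 2) \<bind>\<^sub>P (\<lambda>k. fair_coin \<bind>\<^sub>P (\<lambda>b.
          return_pmf (2 * int ((if b then 1 else 0) + k) - int (Suc j))))"
    by (rule bind_commute_pmf)
  also have "\<dots> = srw_pmf j \<bind>\<^sub>P (\<lambda>u. map_pmf (\<lambda>b. u + pm_one b) fair_coin)"
    unfolding srw_pmf_def map_pmf_def bind_assoc_pmf bind_return_pmf
    by (intro bind_pmf_cong refl) (auto simp: pm_one_def)
  finally show ?thesis .
qed

lemma srw_pmf_collision_prob:
  "measure_pmf.prob (pair_pmf (srw_pmf j) (srw_pmf j)) {p. fst p = snd p} = central_prob j"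
proof -
  let ?B = "binomial_pmf j (1 / 2)"
  have "measure_pmf.prob (pair_pmf (srw_pmf j) (srw_pmf j)) {p. fst p = snd p}
     = measure_pmf.prob (pair_pmf ?B ?B) {p. fst p = snd p}"
    unfolding srw_pmf_def map_pair[symmetric] by (simp add: vimage_def case_prod_unfold)
  also have "\<dots> = measure_pmf.prob (pair_pmf ?B ?B) ((\<lambda>k. (k, k)) ` {..j})"
    by (rule measure_pmf_prob_cong_set_pmf) auto
  also have "\<dots> = (\<Sum>k\<le>j. pmf (pair_pmf ?B ?B) (k, k))"
    by (subst measure_measure_pmf_finite) (auto simp: sum.reindex inj_on_def)
  also have "\<dots> = (\<Sum>k\<le>j. real ((j choose k)\<^sup>2) / 4 ^ j)"
  proof (intro sum.cong refl)
    fix k assume k: "k \<in> {..j}"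
    have "(1 / 2 :: real) ^ k * (1 / 2) ^ (j - k) = (1 / 2) ^ j" using k by (simp add: power_add[symmetric])
    then have "pmf ?B k = real (j choose k) / 2 ^ j" by (simp add: power_one_over)
    then show "pmf (pair_pmf ?B ?B) (k, k) = real ((j choose k)\<^sup>2) / 4 ^ j"
      by (simp add: pmf_pair power2_eq_square power_mult_distrib[symmetric])
  qed
  also have "\<dots> = real (\<Sum>k\<le>j. (j choose k)\<^sup>2) / 4 ^ j"
    by (simp add: sum_divide_distrib)
  finally show ?thesis by (simp add: choose_square_sum central_prob_def)
qed

definition endpoint_pmf :: "nat \<Rightarrow> nat \<Rightarrow> int list pmf" where
  "endpoint_pmf d j = map_pmf last (walk_pmf d j)"

lemma endpoint_pmf_Suc:
  "endpoint_pmf d (Suc j) = endpoint_pmf d j \<bind>\<^sub>P (\<lambda>x. map_pmf (vadd x) (pmf_of_set (unit_steps d)))"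
  unfolding endpoint_pmf_def by (simp add: map_bind_pmf pmf.map_comp o_def bind_map_pmf)

lemma length_endpoint: "d \<in> {1, 2} \<Longrightarrow> x \<in> set_pmf (endpoint_pmf d j) \<Longrightarrow> length x = d"
  by (auto simp: endpoint_pmf_def set_pmf_walk_pmf length_walk_last)

lemma collision_prob_singleton_endpoint:
  assumes d: "d \<in> {1, 2}"
  shows "collision_prob d j {j} = measure_pmf.prob (pair_pmf (endpoint_pmf d j) (endpoint_pmf d j)) {p. fst p = snd p}"
proof -
  have "measure_pmf.prob (pair_pmf (endpoint_pmf d j) (endpoint_pmf d j)) {p. fst p = snd p} =
    measure_pmf.prob (pair_pmf (walk_pmf d j) (walk_pmf d j)) {p. last (fst p) = last (snd p)}"
    unfolding endpoint_pmf_def map_pair[symmetric] by (simp add: vimage_def case_prod_unfold)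
  also have "\<dots> = collision_prob d j {j}" unfolding collision_prob_def
    by (rule measure_pmf_prob_cong_set_pmf) (auto simp: set_pmf_walk_pmf[OF d] last_walk)
  finally show ?thesis by simp
qed

lemma unit_steps_1_pmf: "pmf_of_set (unit_steps 1) = map_pmf (\<lambda>b. [pm_one b]) fair_coin"
proof -
  have "map_pmf (\<lambda>b. [pm_one b]) (pmf_of_set UNIV) = pmf_of_set ((\<lambda>b. [pm_one b]) ` UNIV)"
    by (rule map_pmf_of_set_inj) (auto simp: inj_on_def pm_one_def)
  also have "(\<lambda>b. [pm_one b]) ` UNIV = unit_steps 1" by (auto simp: unit_steps_def UNIV_bool pm_one_def)
  finally show ?thesis by (simp add: bernoulli_pmf_half_conv_pmf_of_set)
qed

lemma endpoint_pmf_1: "endpoint_pmf 1 j = map_pmf (\<lambda>u. [u]) (srw_pmf j)"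
proof (induction j)
  case 0 then show ?case by (simp add: endpoint_pmf_def srw_pmf_def binomial_pmf_0)
next
  case (Suc j)
  show ?case
    unfolding endpoint_pmf_Suc Suc srw_pmf_Suc unit_steps_1_pmf
    by (simp add: map_bind_pmf bind_map_pmf pmf.map_comp o_def vadd_def)
qed

lemma collision_prob_singleton_1: "collision_prob 1 j {j} = central_prob j"
proof -
  have "collision_prob 1 j {j} = measure_pmf.prob (pair_pmf (endpoint_pmf 1 j) (endpoint_pmf 1 j)) {p. fst p = snd p}"
    by (rule collision_prob_singleton_endpoint) simp
  also have "\<dots> = measure_pmf.prob (pair_pmf (srw_pmf j) (srw_pmf j)) {p. fst p = snd p}"
    unfolding endpoint_pmf_1 map_pair[symmetric] by (simp add: vimage_def case_prod_unfold)
  finally show ?thesis by (simp add: srw_pmf_collision_prob)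
qed

text \<open>In the coordinates \<open>(x + y, x - y)\<close> the planar walk becomes two independent copies of the
  walk on \<open>\<int>\<close>.\<close>

definition diag_coords :: "int list \<Rightarrow> int \<times> int" where
  "diag_coords x = (x ! 0 + x ! 1, x ! 0 - x ! 1)"

definition planar_step :: "bool \<times> bool \<Rightarrow> int list" where
  "planar_step p = (case p of (True, True) \<Rightarrow> [1, 0] | (False, False) \<Rightarrow> [-1, 0]
     | (True, False) \<Rightarrow> [0, 1] | (False, True) \<Rightarrow> [0, -1])"

lemma unit_steps_2_pmf: "pmf_of_set (unit_steps 2) = map_pmf planar_step (pair_pmf fair_coin fair_coin)"
proof -
  have coins: "pair_pmf fair_coin fair_coin = pmf_of_set UNIV"
  proof (rule pmf_eqI)
    fix z :: "bool \<times> bool"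
    show "pmf (pair_pmf fair_coin fair_coin) z = pmf (pmf_of_set UNIV) z"
      by (cases z) (simp add: pmf_pair UNIV_Times_UNIV[symmetric] card_UNIV_bool del: UNIV_Times_UNIV)
  qed
  have "map_pmf planar_step (pmf_of_set UNIV) = pmf_of_set (planar_step ` UNIV)"
    by (rule map_pmf_of_set_inj) (auto simp: inj_on_def planar_step_def split: bool.splits)
  also have "planar_step ` UNIV = unit_steps 2"
  proof -
    have "UNIV = {(True, True), (False, False), (True, False), (False, True)}" by auto
    then have "planar_step ` UNIV =
        planar_step ` {(True, True), (False, False), (True, False), (False, True)}" by simp
    then show ?thesis by (simp add: unit_steps_def planar_step_def)
  qed
  finally show ?thesis by (simp add: coins)
qed

lemma pair_pmf_bind_bind:
  "pair_pmf (A \<bind>\<^sub>P f) (B \<bind>\<^sub>P g) = pair_pmf A B \<bind>\<^sub>P (\<lambda>(a, b). pair_pmf (f a) (g b))"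
  unfolding pair_pmf_def bind_assoc_pmf
  by (simp add: bind_assoc_pmf bind_return_pmf) (subst bind_commute_pmf, rule refl)

lemma length_2_cases:
  assumes "length x = 2"
  obtains a b where "x = [a, b]"
  using assms by (auto simp: length_Suc_conv numeral_2_eq_2)

lemma map_diag_coords_endpoint_pmf_2:
  "map_pmf diag_coords (endpoint_pmf 2 j) = pair_pmf (srw_pmf j) (srw_pmf j)"
proof (induction j)
  case 0 then show ?case by (simp add: endpoint_pmf_def srw_pmf_def binomial_pmf_0 diag_coords_def)
next
  case (Suc j)
  let ?step = "\<lambda>(u, v). map_pmf (\<lambda>(b, c). (u + pm_one b, v + pm_one c)) (pair_pmf fair_coin fair_coin)"
  have "map_pmf diag_coords (endpoint_pmf 2 (Suc j)) =
      endpoint_pmf 2 j \<bind>\<^sub>P (\<lambda>x. map_pmf (\<lambda>p. diag_coords (vadd x (planar_step p))) (pair_pmf fair_coin fair_coin))"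
    unfolding endpoint_pmf_Suc unit_steps_2_pmf by (simp add: map_bind_pmf pmf.map_comp o_def)
  also have "\<dots> = endpoint_pmf 2 j \<bind>\<^sub>P (\<lambda>x. ?step (diag_coords x))"
  proof (intro bind_pmf_cong refl)
    fix x assume "x \<in> set_pmf (endpoint_pmf 2 j)"
    then have "length x = 2" by (simp add: length_endpoint)
    then obtain a b where x: "x = [a, b]" by (rule length_2_cases)
    have diag: "diag_coords x = (a + b, a - b)" by (simp add: x diag_coords_def)
    show "map_pmf (\<lambda>p. diag_coords (vadd x (planar_step p))) (pair_pmf fair_coin fair_coin) = ?step (diag_coords x)"
      unfolding diag prod.case
      by (intro map_pmf_cong refl) (auto simp: x diag_coords_def vadd_def planar_step_def pm_one_def split: bool.splits)
  qed
  also have "\<dots> = pair_pmf (srw_pmf j) (srw_pmf j) \<bind>\<^sub>P ?step"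
    by (simp add: bind_map_pmf[symmetric] Suc)
  also have "\<dots> = pair_pmf (srw_pmf (Suc j)) (srw_pmf (Suc j))"
    unfolding srw_pmf_Suc pair_pmf_bind_bind by (simp add: map_pair[symmetric] case_prod_unfold)
  finally show ?case .
qed

lemma collision_prob_singleton_2: "collision_prob 2 j {j} = (central_prob j)\<^sup>2"
proof -
  let ?E = "endpoint_pmf 2 j" and ?S = "pair_pmf (srw_pmf j) (srw_pmf j)"
  have "collision_prob 2 j {j} = measure_pmf.prob (pair_pmf ?E ?E) {p. fst p = snd p}"
    by (simp add: collision_prob_singleton_endpoint)
  also have "\<dots> = measure_pmf.prob (pair_pmf ?E ?E) {p. diag_coords (fst p) = diag_coords (snd p)}"
  proof (rule measure_pmf_prob_cong_set_pmf)
    fix x assume "x \<in> set_pmf (pair_pmf ?E ?E)"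
    then obtain y y' where x: "x = (y, y')" "length y = 2" "length y' = 2"
      by (auto simp: length_endpoint)
    obtain a b where "y = [a, b]" using x(2) by (rule length_2_cases)
    moreover obtain a' b' where "y' = [a', b']" using x(3) by (rule length_2_cases)
    ultimately show "x \<in> {p. fst p = snd p} \<longleftrightarrow> x \<in> {p. diag_coords (fst p) = diag_coords (snd p)}"
      using x by (auto simp: diag_coords_def)
  qed
  also have "\<dots> = measure_pmf.prob (pair_pmf ?S ?S) {p. fst p = snd p}"
    unfolding map_diag_coords_endpoint_pmf_2[symmetric] map_pair[symmetric]
    by (simp add: vimage_def case_prod_unfold)
  also have "\<dots> = measure_pmf.prob (pair_pmf ?S ?S) ({p. fst p = snd p} \<times> {p. fst p = snd p})"
    by (subst pair_pair_pmf_swap_middle)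
       (auto intro!: arg_cong[where f = "measure_pmf.prob _"] simp: vimage_def case_prod_unfold)
  also have "\<dots> = (central_prob j)\<^sup>2"
    by (subst measure_pmf_prob_product) (auto simp: srw_pmf_collision_prob power2_eq_square)
  finally show ?thesis .
qed

section \<open>Renewal bound for the collision series\<close>

definition insert_shift :: "nat \<times> nat set \<Rightarrow> nat set" where
  "insert_shift p = insert (fst p) ((\<lambda>n. n + fst p) ` snd p)"

lemma insert_shift_props:
  assumes "a \<in> {1..M}" "B \<subseteq> {1..M - a}"
  shows "Min (insert_shift (a, B)) = a" "tail_shift (insert_shift (a, B)) = B"
    "insert_shift (a, B) \<in> Pow {1..M} - {{}}" "finite (insert_shift (a, B))"
proof -
  have fB: "finite B" using assms(2) finite_subset by blast
  have ge: "x \<in> B \<Longrightarrow> x \<ge> 1" for x using assms(2) by auto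
  show Min: "Min (insert_shift (a, B)) = a" unfolding insert_shift_def using fB ge
    by (intro Min_eqI) auto
  have "insert_shift (a, B) - {a} = (\<lambda>n. n + a) ` B" unfolding insert_shift_def using ge by force
  then show "tail_shift (insert_shift (a, B)) = B" by (simp add: tail_shift_def Min image_image)
  have "x \<in> B \<Longrightarrow> x + a \<le> M" for x using assms by force
  then show "insert_shift (a, B) \<in> Pow {1..M} - {{}}" unfolding insert_shift_def using assms by auto
  show "finite (insert_shift (a, B))" using fB by (simp add: insert_shift_def)
qed

lemma bij_betw_insert_shift:
  "bij_betw insert_shift (SIGMA a:{1..M}. Pow {1..M - a}) (Pow {1..M} - {{}})"
proof (rule bij_betw_byWitness[where f' = "\<lambda>A. (Min A, tail_shift A)"])
  show "\<forall>p\<in>(SIGMA a:{1..M}. Pow {1..M - a}). (Min (insert_shift p), tail_shift (insert_shift p)) = p"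
    using insert_shift_props by auto
  show "insert_shift ` (SIGMA a:{1..M}. Pow {1..M - a}) \<subseteq> Pow {1..M} - {{}}"
  proof clarify
    fix a B assume "a \<in> {1..M}" "B \<subseteq> {1..M - a}"
    then show "insert_shift (a, B) \<in> Pow {1..M} - {{}}" by (rule insert_shift_props(3))
  qed
  show "\<forall>A\<in>Pow {1..M} - {{}}. insert_shift (Min A, tail_shift A) = A"
  proof
    fix A assume A: "A \<in> Pow {1..M} - {{}}"
    then have fA: "finite A" "A \<noteq> {}" using finite_subset by auto
    then have "(\<lambda>n. n + Min A) ` (\<lambda>n. n - Min A) ` (A - {Min A}) = A - {Min A}"
      by (force simp: image_image)
    then show "insert_shift (Min A, tail_shift A) = A"
      using Min_in[OF fA] by (auto simp: insert_shift_def tail_shift_def)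
  qed
  show "(\<lambda>A. (Min A, tail_shift A)) ` (Pow {1..M} - {{}}) \<subseteq> (SIGMA a:{1..M}. Pow {1..M - a})"
  proof
    fix p assume "p \<in> (\<lambda>A. (Min A, tail_shift A)) ` (Pow {1..M} - {{}})"
    then obtain A where A: "A \<subseteq> {1..M}" "A \<noteq> {}" and p: "p = (Min A, tail_shift A)" by auto
    then have fA: "finite A" using finite_subset by blast
    have "n - Min A \<in> {1..M - Min A}" if "n \<in> A" "n \<noteq> Min A" for n
    proof -
      have "Min A < n" using Min_le[OF fA that(1)] that(2) by simp
      then show ?thesis using A that(1) by auto
    qed
    then have "tail_shift A \<subseteq> {1..M - Min A}" unfolding tail_shift_def by blast
    then show "p \<in> (SIGMA a:{1..M}. Pow {1..M - a})"
      using A Min_in[OF fA A(2)] p by auto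
  qed
qed

lemma sum_nonempty_subsets_collision_prob:
  assumes d: "d \<in> {1, 2}"
  shows "(\<Sum>A\<in>Pow {1..M} - {{}}. G (card A) * collision_prob d M A) =
    (\<Sum>a\<in>{1..M}. collision_prob d a {a} *
       (\<Sum>B\<in>Pow {1..M - a}. G (card B + 1) * collision_prob d (M - a) B))"
proof -
  have "(\<Sum>A\<in>Pow {1..M} - {{}}. G (card A) * collision_prob d M A) =
      (\<Sum>(a, B)\<in>(SIGMA a:{1..M}. Pow {1..M - a}).
         collision_prob d a {a} * (G (card B + 1) * collision_prob d (M - a) B))"
  proof (rule sum.reindex_bij_betw[OF bij_betw_insert_shift, symmetric, THEN trans], rule sum.cong)
    fix p assume "p \<in> (SIGMA a:{1..M}. Pow {1..M - a})"
    then obtain a B where p: "p = (a, B)" "a \<in> {1..M}" "B \<subseteq> {1..M - a}" by auto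
    note props = insert_shift_props[OF p(2,3)]
    have "a \<notin> (\<lambda>n. n + a) ` B" using p(3) by force
    then have "card (insert_shift (a, B)) = card B + 1"
      using props(4) by (simp add: insert_shift_def card_image)
    then show "G (card (insert_shift p)) * collision_prob d M (insert_shift p) =
        (case p of (a, B) \<Rightarrow> collision_prob d a {a} * (G (card B + 1) * collision_prob d (M - a) B))"
      using collision_prob_split_Min[OF d props(4), of M] props p by auto
  qed simp
  also have "\<dots> = (\<Sum>a\<in>{1..M}. collision_prob d a {a} *
       (\<Sum>B\<in>Pow {1..M - a}. G (card B + 1) * collision_prob d (M - a) B))"
    by (subst sum.Sigma[symmetric]) (auto simp: sum_distrib_left)
  finally show ?thesis .
qed

lemma collision_prob_singleton:
  assumes "d \<in> {1, 2}" "a \<in> {1..N}"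
  shows "collision_prob d N {a} = collision_prob d a {a}"
  using collision_prob_split_Min[OF assms(1), of "{a}" N] assms(2) by (simp add: tail_shift_def)

lemma sum_Pow_atLeastAtMost_split:
  fixes F :: "nat set \<Rightarrow> 'a :: comm_monoid_add"
  shows "(\<Sum>A\<in>Pow {1..N}. F A) =
    F {} + (\<Sum>k\<in>{1..N}. F {k}) + (\<Sum>A\<in>{A\<in>Pow {1..N}. 2 \<le> card A}. F A)"
proof -
  let ?P0 = "{A \<in> Pow {1..N}. card A = 0}" and ?P1 = "{A \<in> Pow {1..N}. card A = 1}"
    and ?P2 = "{A\<in>Pow {1..N}. 2 \<le> card A}"
  have split: "Pow {1..N} = (?P0 \<union> ?P1) \<union> ?P2" by auto
  have "(\<Sum>A\<in>Pow {1..N}. F A) = (\<Sum>A\<in>(?P0 \<union> ?P1) \<union> ?P2. F A)"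
    using split by (rule arg_cong)
  also have "\<dots> = (\<Sum>A\<in>?P0 \<union> ?P1. F A) + (\<Sum>A\<in>?P2. F A)"
    by (rule sum.union_disjoint) auto
  also have "(\<Sum>A\<in>?P0 \<union> ?P1. F A) = (\<Sum>A\<in>?P0. F A) + (\<Sum>A\<in>?P1. F A)"
    by (rule sum.union_disjoint) auto
  also have "?P0 = {{}}" using finite_subset[of _ "{1..N}"] by auto
  also have "?P1 = (\<lambda>k. {k}) ` {1..N}" by (auto simp: card_1_singleton_iff)
  finally show ?thesis by (simp add: sum.reindex)
qed

definition renewal_sum :: "nat \<Rightarrow> real \<Rightarrow> nat \<Rightarrow> real" where
  "renewal_sum d l M = (\<Sum>A\<in>Pow {1..M}. l ^ card A * collision_prob d M A)"

lemma renewal_sum_eq: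
  assumes d: "d \<in> {1, 2}"
  shows "renewal_sum d l M = 1 + (\<Sum>a\<in>{1..M}. l * collision_prob d a {a} * renewal_sum d l (M - a))"
proof -
  have "renewal_sum d l M = 1 + (\<Sum>A\<in>Pow {1..M} - {{}}. l ^ card A * collision_prob d M A)"
    unfolding renewal_sum_def by (subst sum.remove[of _ "{}"]) simp_all
  then show ?thesis
    unfolding sum_nonempty_subsets_collision_prob[OF d] renewal_sum_def
    by (simp add: sum_distrib_left mult_ac)
qed

lemma renewal_sum_le:
  assumes d: "d \<in> {1, 2}" and l: "l \<ge> 0"
    and x: "l * (\<Sum>a\<in>{1..N}. collision_prob d a {a}) < 1" and M: "M \<le> N"
  shows "renewal_sum d l M \<le> 1 / (1 - l * (\<Sum>a\<in>{1..N}. collision_prob d a {a}))"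
  using M
proof (induction M rule: less_induct)
  case (less M)
  define x where "x = l * (\<Sum>a\<in>{1..N}. collision_prob d a {a})"
  have x1: "x < 1" using x by (simp add: x_def)
  have "renewal_sum d l M \<le> 1 + (\<Sum>a\<in>{1..M}. l * collision_prob d a {a} * (1 / (1 - x)))"
    unfolding renewal_sum_eq[OF d, of l M]
  proof (intro add_left_mono sum_mono mult_left_mono)
    fix a assume "a \<in> {1..M}"
    then show "renewal_sum d l (M - a) \<le> 1 / (1 - x)" using less unfolding x_def by auto
    show "0 \<le> l * collision_prob d a {a}" using l collision_prob_nonneg by simp
  qed
  also have "\<dots> = 1 + l * (\<Sum>a\<in>{1..M}. collision_prob d a {a}) / (1 - x)"
    by (simp add: sum_distrib_left sum_divide_distrib mult_ac)
  also have "\<dots> \<le> 1 + x / (1 - x)"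
  proof -
    have "(\<Sum>a\<in>{1..M}. collision_prob d a {a}) \<le> (\<Sum>a\<in>{1..N}. collision_prob d a {a})"
      using less.prems by (intro sum_mono2) (auto simp: collision_prob_nonneg)
    then have "l * (\<Sum>a\<in>{1..M}. collision_prob d a {a}) \<le> x"
      unfolding x_def using l by (rule mult_left_mono)
    then show ?thesis using x1 by (simp add: divide_right_mono)
  qed
  also have "\<dots> = 1 / (1 - x)" using x1 by (simp add: field_simps)
  finally show ?case by (simp add: x_def)
qed

text \<open>The subsets with at least two elements are exactly the pairs of a first collision and a
  nonempty renewal after it, whence the quadratic bound.\<close>

lemma collision_series_ge2_le:
  assumes d: "d \<in> {1, 2}" and l: "l \<ge> 0"
    and x: "x = l * (\<Sum>a\<in>{1..N}. collision_prob d a {a})" "x < 1"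
  shows "(\<Sum>A\<in>{A\<in>Pow {1..N}. 2 \<le> card A}. l ^ card A * collision_prob d N A) \<le> x\<^sup>2 / (1 - x)"
proof -
  let ?q = "\<lambda>a. l * collision_prob d a {a}"
  have "renewal_sum d l N = 1 + (\<Sum>a\<in>{1..N}. ?q a) +
      (\<Sum>A\<in>{A\<in>Pow {1..N}. 2 \<le> card A}. l ^ card A * collision_prob d N A)"
    unfolding renewal_sum_def sum_Pow_atLeastAtMost_split[of _ N]
    using collision_prob_singleton[OF d, of _ N] by simp
  then have "(\<Sum>A\<in>{A\<in>Pow {1..N}. 2 \<le> card A}. l ^ card A * collision_prob d N A) =
      (\<Sum>a\<in>{1..N}. ?q a * renewal_sum d l (N - a)) - (\<Sum>a\<in>{1..N}. ?q a)"
    unfolding renewal_sum_eq[OF d, of l N] by simp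
  also have "\<dots> = (\<Sum>a\<in>{1..N}. ?q a * (renewal_sum d l (N - a) - 1))"
    by (simp add: right_diff_distrib sum_subtractf)
  also have "\<dots> \<le> (\<Sum>a\<in>{1..N}. ?q a * (x / (1 - x)))"
  proof (intro sum_mono mult_left_mono)
    fix a assume "a \<in> {1..N}"
    then have "renewal_sum d l (N - a) \<le> 1 / (1 - x)"
      using renewal_sum_le[OF d l] x by simp
    then show "renewal_sum d l (N - a) - 1 \<le> x / (1 - x)" using x(2) by (simp add: field_simps)
  qed (use l collision_prob_nonneg in simp)
  also have "\<dots> = (\<Sum>a\<in>{1..N}. ?q a) * (x / (1 - x))"
    by (rule sum_distrib_right[symmetric])
  also have "(\<Sum>a\<in>{1..N}. ?q a) = x"
    by (simp add: x(1) sum_distrib_left)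
  finally show ?thesis by (simp add: power2_eq_square)
qed

section \<open>Expected number of collisions up to time \<open>N\<close>\<close>

lemma sum_inverse_sqrt_le: "(\<Sum>a\<in>{1..N}. 1 / sqrt (real a)) \<le> 2 * sqrt (real N)"
proof (induction N)
  case (Suc N)
  define s where "s = sqrt (real N)"
  define t where "t = sqrt (real N + 1)"
  have t0: "t > 0" and ts: "t\<^sup>2 = s\<^sup>2 + 1" by (simp_all add: s_def t_def)
  have "(s * t)\<^sup>2 \<le> (s\<^sup>2 + 1 / 2)\<^sup>2" using ts by (simp add: power_mult_distrib power2_eq_square algebra_simps)
  then have "s * t \<le> s\<^sup>2 + 1 / 2" by (rule power2_le_imp_le) simp
  then have "1 \<le> (2 * t - 2 * s) * t" using ts by (simp add: algebra_simps power2_eq_square)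
  then have "1 / t \<le> 2 * t - 2 * s" using t0 by (simp add: divide_le_eq)
  moreover have "(\<Sum>a\<in>{1..Suc N}. 1 / sqrt (real a)) = (\<Sum>a\<in>{1..N}. 1 / sqrt (real a)) + 1 / t"
    by (simp add: t_def add.commute)
  ultimately show ?case using Suc by (simp add: s_def t_def add.commute)
qed simp

lemma sum_inverse_le_1_plus_ln: "N \<ge> 1 \<Longrightarrow> (\<Sum>a\<in>{1..N}. 1 / real a) \<le> 1 + ln (real N)"
  using euler_mascheroni_sequence_decreasing[of 1 N] by (simp add: harm_def inverse_eq_divide)

definition walk_rate :: "nat \<Rightarrow> nat \<Rightarrow> real" where
  "walk_rate d N = (if d = 1 then real N powr (1 / 2) else ln (real N))"

lemma sum_collision_prob_le:
  assumes d: "d \<in> {1, 2}" and N: "N \<ge> 2"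
  shows "(\<Sum>a\<in>{1..N}. collision_prob d a {a}) \<le> 3 * walk_rate d N"
proof (cases "d = 1")
  case True
  have single: "collision_prob d a {a} \<le> 1 / sqrt (real a)" if "a \<in> {1..N}" for a
  proof -
    have "(central_prob a)\<^sup>2 \<le> 1 / real a"
      using central_prob_square_le_inverse[of a] that by simp
    then have "sqrt ((central_prob a)\<^sup>2) \<le> sqrt (1 / real a)" by (rule real_sqrt_le_mono)
    then show ?thesis
      unfolding True collision_prob_singleton_1 by (simp add: central_prob_def real_sqrt_divide)
  qed
  have "(\<Sum>a\<in>{1..N}. collision_prob d a {a}) \<le> (\<Sum>a\<in>{1..N}. 1 / sqrt (real a))"
    using single by (rule sum_mono)
  also have "\<dots> \<le> 2 * sqrt (real N)" by (rule sum_inverse_sqrt_le)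
  also have "\<dots> \<le> 3 * walk_rate d N" using True by (simp add: walk_rate_def powr_half_sqrt)
  finally show ?thesis .
next
  case False
  then have d2: "d = 2" using d by simp
  have single: "collision_prob 2 a {a} \<le> 1 / real a" if "a \<in> {1..N}" for a
    using central_prob_square_le_inverse[of a] that by (simp add: collision_prob_singleton_2)
  have "(\<Sum>a\<in>{1..N}. collision_prob 2 a {a}) \<le> (\<Sum>a\<in>{1..N}. 1 / real a)"
    using single by (rule sum_mono)
  also have "\<dots> \<le> 1 + ln (real N)" using N by (intro sum_inverse_le_1_plus_ln) simp
  finally have "(\<Sum>a\<in>{1..N}. collision_prob 2 a {a}) \<le> 1 + ln (real N)" .
  moreover have "2 / 3 \<le> ln (real N)"
  proof -
    have "ln 2 \<le> ln (real N)" using N by simp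
    then show ?thesis using ln2_ge_two_thirds by linarith
  qed
  ultimately show ?thesis using d2 by (simp add: walk_rate_def)
qed

section \<open>Orthogonality of products of independent signs\<close>

definition walsh :: "(nat \<Rightarrow> int list \<Rightarrow> 'w \<Rightarrow> real) \<Rightarrow> (nat \<times> int list) set \<Rightarrow> 'w \<Rightarrow> real" where
  "walsh h S \<omega> = (\<Prod>i\<in>S. case_prod h i \<omega>)"

locale sign_environment = prob_space Q for Q :: "'w measure" +
  fixes h :: "nat \<Rightarrow> int list \<Rightarrow> 'w \<Rightarrow> real" and d :: nat
  assumes h_meas [measurable]: "\<And>n x. h n x \<in> borel_measurable Q"
    and h_indep: "indep_vars (\<lambda>_. borel) (\<lambda>(n, x). h n x) {(n, x). length x = d}"
    and h_plus: "\<And>n x. length x = d \<Longrightarrow> prob {\<omega> \<in> space Q. h n x \<omega> = 1} = 1 / 2"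
    and h_minus: "\<And>n x. length x = d \<Longrightarrow> prob {\<omega> \<in> space Q. h n x \<omega> = -1} = 1 / 2"
begin

abbreviation sites :: "(nat \<times> int list) set" where
  "sites \<equiv> {(n, x). length x = d}"

lemma walsh_measurable [measurable]: "walsh h S \<in> borel_measurable Q"
  unfolding walsh_def by (simp add: case_prod_unfold)

lemma h_pm1_AE:
  assumes "length x = d"
  shows "AE \<omega> in Q. h n x \<omega> = 1 \<or> h n x \<omega> = -1"
proof -
  let ?A = "{\<omega> \<in> space Q. h n x \<omega> = 1}" and ?B = "{\<omega> \<in> space Q. h n x \<omega> = -1}"
  have "?A \<in> sets Q" "?B \<in> sets Q" by measurable
  then have "prob (?A \<union> ?B) = prob ?A + prob ?B"
    by (intro finite_measure_Union) auto
  then have "prob (?A \<union> ?B) = 1" using h_plus[OF assms] h_minus[OF assms] by simp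
  then have "AE \<omega> in Q. \<omega> \<in> ?A \<union> ?B" by (rule AE_prob_1)
  then show ?thesis by eventually_elim auto
qed

lemma h_integrable_mean_zero:
  assumes "length x = d"
  shows "integrable Q (h n x)" "expectation (h n x) = 0"
proof -
  let ?A = "{\<omega> \<in> space Q. h n x \<omega> = 1}" and ?B = "{\<omega> \<in> space Q. h n x \<omega> = -1}"
  let ?g = "\<lambda>\<omega>. indicator ?A \<omega> - indicator ?B \<omega> :: real"
  have AE_eq: "AE \<omega> in Q. ?g \<omega> = h n x \<omega>"
    using h_pm1_AE[OF assms, of n] AE_space by eventually_elim (auto simp: indicator_def)
  have sets: "?A \<in> sets Q" "?B \<in> sets Q" by measurable
  then have "integrable Q ?g"
    by (intro Bochner_Integration.integrable_diff integrable_real_indicator) (auto simp: emeasure_eq_measure)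
  then show "integrable Q (h n x)" by (rule integrable_cong_AE_imp[OF _ _ AE_eq]) simp
  have "expectation (h n x) = expectation ?g"
    using AE_eq by (intro integral_cong_AE) auto
  also have "\<dots> = prob ?A - prob ?B"
    using sets by (subst Bochner_Integration.integral_diff) (auto simp: emeasure_eq_measure)
  finally show "expectation (h n x) = 0" using h_plus[OF assms] h_minus[OF assms] by simp
qed

lemma walsh_integrable_integral:
  assumes S: "finite S" "S \<subseteq> sites"
  shows "integrable Q (walsh h S)" "expectation (walsh h S) = (if S = {} then 1 else 0)"
proof -
  have ind: "indep_vars (\<lambda>_. borel) (\<lambda>(n, x). h n x) S" using h_indep S(2) by (rule indep_vars_subset)
  have int: "\<And>i. i \<in> S \<Longrightarrow> integrable Q ((\<lambda>(n, x). h n x) i)" using S(2) h_integrable_mean_zero by auto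
  show "integrable Q (walsh h S)"
    unfolding walsh_def by (rule indep_vars_integrable[OF S(1) ind int])
  have "expectation (walsh h S) = (\<Prod>i\<in>S. expectation ((\<lambda>(n, x). h n x) i))"
    unfolding walsh_def by (rule indep_vars_lebesgue_integral[OF S(1) ind int])
  also have "\<dots> = (\<Prod>i\<in>S. 0)"
    using S(2) h_integrable_mean_zero by (intro prod.cong refl) auto
  finally show "expectation (walsh h S) = (if S = {} then 1 else 0)" using S(1) by (simp add: card_gt_0_iff)
qed

text \<open>Squares of signs are \<open>1\<close>, so a product of two Walsh functions is the Walsh function of the
  symmetric difference.\<close>

lemma walsh_mult_AE:
  assumes S: "finite S" "S \<subseteq> sites" and T: "finite T" "T \<subseteq> sites"
  shows "AE \<omega> in Q. walsh h S \<omega> * walsh h T \<omega> = walsh h ((S - T) \<union> (T - S)) \<omega>"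
proof -
  let ?f = "\<lambda>\<omega> i. case_prod h i \<omega>"
  have "AE \<omega> in Q. \<forall>i\<in>S \<inter> T. (?f \<omega> i)\<^sup>2 = 1"
  proof (rule AE_finite_allI)
    fix i assume "i \<in> S \<inter> T"
    then obtain n x where i: "i = (n, x)" "length x = d" using S by auto
    show "AE \<omega> in Q. (?f \<omega> i)\<^sup>2 = 1"
      using h_pm1_AE[OF i(2), of n] by eventually_elim (auto simp: i)
  qed (use S in simp)
  then show ?thesis
  proof eventually_elim
    case (elim \<omega>)
    have one: "prod (?f \<omega>) (S \<inter> T) * prod (?f \<omega>) (S \<inter> T) = 1"
      using elim by (simp add: prod.distrib[symmetric] power2_eq_square)
    have eS: "S = (S - T) \<union> (S \<inter> T)" and eT: "T = (T - S) \<union> (S \<inter> T)" by auto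
    have "prod (?f \<omega>) S = prod (?f \<omega>) (S - T) * prod (?f \<omega>) (S \<inter> T)"
      by (subst eS, rule prod.union_disjoint) (use S T in auto)
    moreover have "prod (?f \<omega>) T = prod (?f \<omega>) (T - S) * prod (?f \<omega>) (S \<inter> T)"
      by (subst eT, rule prod.union_disjoint) (use S T in auto)
    moreover have "prod (?f \<omega>) ((S - T) \<union> (T - S)) = prod (?f \<omega>) (S - T) * prod (?f \<omega>) (T - S)"
      by (rule prod.union_disjoint) (use S T in auto)
    ultimately show ?case using one unfolding walsh_def by (simp add: mult_ac)
  qed
qed

lemma walsh_mult_integrable_integral:
  assumes S: "finite S" "S \<subseteq> sites" and T: "finite T" "T \<subseteq> sites"
  shows "integrable Q (\<lambda>\<omega>. walsh h S \<omega> * walsh h T \<omega>)"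
    "expectation (\<lambda>\<omega>. walsh h S \<omega> * walsh h T \<omega>) = (if S = T then 1 else 0)"
proof -
  have U: "finite ((S - T) \<union> (T - S))" "(S - T) \<union> (T - S) \<subseteq> sites" using S T by auto
  have AE_eq: "AE \<omega> in Q. walsh h ((S - T) \<union> (T - S)) \<omega> = walsh h S \<omega> * walsh h T \<omega>"
    using walsh_mult_AE[OF S T] by eventually_elim simp
  show "integrable Q (\<lambda>\<omega>. walsh h S \<omega> * walsh h T \<omega>)"
    by (rule integrable_cong_AE_imp[OF walsh_integrable_integral(1)[OF U] _ AE_eq]) simp
  have "expectation (\<lambda>\<omega>. walsh h S \<omega> * walsh h T \<omega>) = expectation (walsh h ((S - T) \<union> (T - S)))"
    using AE_eq by (intro integral_cong_AE) auto
  also have "\<dots> = (if S = T then 1 else 0)" using walsh_integrable_integral(2)[OF U] by auto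
  finally show "expectation (\<lambda>\<omega>. walsh h S \<omega> * walsh h T \<omega>) = (if S = T then 1 else 0)" .
qed

lemma walsh_sum_square_integrable_integral:
  assumes K: "finite K" and \<sigma>: "\<And>k. k \<in> K \<Longrightarrow> finite (\<sigma> k) \<and> \<sigma> k \<subseteq> sites"
  shows "integrable Q (\<lambda>\<omega>. (\<Sum>k\<in>K. \<beta> k * walsh h (\<sigma> k) \<omega>)\<^sup>2)"
    "expectation (\<lambda>\<omega>. (\<Sum>k\<in>K. \<beta> k * walsh h (\<sigma> k) \<omega>)\<^sup>2) =
      (\<Sum>k\<in>K. \<Sum>k'\<in>K. \<beta> k * \<beta> k' * (if \<sigma> k = \<sigma> k' then 1 else 0))"
proof -
  let ?t = "\<lambda>k k' \<omega>. \<beta> k * \<beta> k' * (walsh h (\<sigma> k) \<omega> * walsh h (\<sigma> k') \<omega>)"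
  have sq: "(\<lambda>\<omega>. (\<Sum>k\<in>K. \<beta> k * walsh h (\<sigma> k) \<omega>)\<^sup>2) = (\<lambda>\<omega>. \<Sum>k\<in>K. \<Sum>k'\<in>K. ?t k k' \<omega>)"
    by (simp add: power2_eq_square sum_product mult_ac)
  have int: "integrable Q (?t k k')" "expectation (?t k k') = \<beta> k * \<beta> k' * (if \<sigma> k = \<sigma> k' then 1 else 0)"
    if "k \<in> K" "k' \<in> K" for k k'
    using walsh_mult_integrable_integral[of "\<sigma> k" "\<sigma> k'"] \<sigma> that by auto
  show "integrable Q (\<lambda>\<omega>. (\<Sum>k\<in>K. \<beta> k * walsh h (\<sigma> k) \<omega>)\<^sup>2)"
    unfolding sq using int(1) by (intro Bochner_Integration.integrable_sum) auto
  show "expectation (\<lambda>\<omega>. (\<Sum>k\<in>K. \<beta> k * walsh h (\<sigma> k) \<omega>)\<^sup>2) =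
      (\<Sum>k\<in>K. \<Sum>k'\<in>K. \<beta> k * \<beta> k' * (if \<sigma> k = \<sigma> k' then 1 else 0))"
  proof -
    have "expectation (\<lambda>\<omega>. \<Sum>k\<in>K. \<Sum>k'\<in>K. ?t k k' \<omega>) = (\<Sum>k\<in>K. expectation (\<lambda>\<omega>. \<Sum>k'\<in>K. ?t k k' \<omega>))"
      using int(1) by (intro Bochner_Integration.integral_sum Bochner_Integration.integrable_sum) auto
    also have "\<dots> = (\<Sum>k\<in>K. \<Sum>k'\<in>K. expectation (?t k k'))"
      using int(1) by (intro sum.cong refl Bochner_Integration.integral_sum) auto
    also have "\<dots> = (\<Sum>k\<in>K. \<Sum>k'\<in>K. \<beta> k * \<beta> k' * (if \<sigma> k = \<sigma> k' then 1 else 0))"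
      by (intro sum.cong refl int(2))
    finally show ?thesis unfolding sq .
  qed
qed

end

section \<open>Chaos expansion of the partition function\<close>

definition visits :: "nat set \<Rightarrow> int list list \<Rightarrow> (nat \<times> int list) set" where
  "visits A w = (\<lambda>n. (n, w ! n)) ` A"

lemma visits_eq_iff: "visits A w = visits B w' \<longleftrightarrow> A = B \<and> (\<forall>n\<in>A. w ! n = w' ! n)"
proof
  assume eq: "visits A w = visits B w'"
  have "A = fst ` visits A w" "B = fst ` visits B w'" by (auto simp: visits_def image_image)
  then have "A = B" using eq by simp
  moreover have "w ! n = w' ! n" if "n \<in> A" for n
    using eq that by (auto simp: visits_def)
  ultimately show "A = B \<and> (\<forall>n\<in>A. w ! n = w' ! n)" by blast
qed (auto simp: visits_def)

lemma prod_eq_walsh_visits: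
  "finite A \<Longrightarrow> (\<Prod>n\<in>A. h n (w ! n) \<omega>) = walsh h (visits A w) \<omega>"
  unfolding walsh_def visits_def by (subst prod.reindex) (auto simp: inj_on_def)

lemma Zpart_eq_sum_walsh:
  assumes d: "d \<in> {1, 2}"
  shows "Zpart d c h N \<omega> =
    (\<Sum>A\<in>Pow {1..N}. c N ^ card A * (\<Sum>w\<in>walks d N. walsh h (visits A w) \<omega>) / card (walks d N))"
proof -
  have fw: "finite (walks d N)" "walks d N \<noteq> {}" using finite_walks[OF d] by auto
  have expand: "(\<Prod>n\<in>{1..N}. 1 + c N * h n (w ! n) \<omega>) =
      (\<Sum>A\<in>Pow {1..N}. c N ^ card A * walsh h (visits A w) \<omega>)" for w
  proof -
    have "(\<Prod>n\<in>{1..N}. c N * h n (w ! n) \<omega> + 1) =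
        (\<Sum>A\<in>Pow {1..N}. (\<Prod>n\<in>A. c N * h n (w ! n) \<omega>) * (\<Prod>n\<in>{1..N} - A. 1))"
      by (rule prod_add) simp
    also have "\<dots> = (\<Sum>A\<in>Pow {1..N}. c N ^ card A * walsh h (visits A w) \<omega>)"
      by (intro sum.cong refl) (auto simp: prod.distrib prod_eq_walsh_visits finite_subset)
    finally show ?thesis by (simp add: add.commute)
  qed
  have "Zpart d c h N \<omega> = (\<Sum>w\<in>walks d N. \<Prod>n\<in>{1..N}. 1 + c N * h n (w ! n) \<omega>) / card (walks d N)"
    unfolding Zpart_def P0_def by (rule integral_pmf_of_set[OF fw(2,1)])
  also have "\<dots> = (\<Sum>A\<in>Pow {1..N}. c N ^ card A * (\<Sum>w\<in>walks d N. walsh h (visits A w) \<omega>) / card (walks d N))"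
    unfolding expand by (subst sum.swap) (simp add: sum_divide_distrib sum_distrib_left)
  finally show ?thesis .
qed

lemma fk_eq_average:
  assumes d: "d \<in> {1, 2}" and k: "k \<le> N"
  shows "fk d c h N k \<omega> = c N * (\<Sum>w\<in>walks d N. h k (w ! k) \<omega>) / card (walks d N)"
proof -
  have fw: "finite (walks d N)" "walks d N \<noteq> {}" using finite_walks[OF d] by auto
  let ?M = "map_pmf (\<lambda>w. w ! k) (walk_pmf d k)" and ?V = "(\<lambda>w. w ! k) ` walks d k"
  have fV: "finite ?V" using finite_walks[OF d] by simp
  have set_M: "set_pmf ?M = ?V" by (simp add: set_pmf_walk_pmf[OF d])
  have p0_eq: "p0 d k x = pmf ?M x" for x
    unfolding p0_def P0_eq_walk_pmf[OF d] by (simp add: pmf_map vimage_def)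
  have "(\<Sum>w\<in>walks d N. h k (w ! k) \<omega>) / card (walks d N) = measure_pmf.expectation (P0 d N) (\<lambda>w. h k (w ! k) \<omega>)"
    unfolding P0_def by (rule integral_pmf_of_set[OF fw(2,1), symmetric])
  also have "\<dots> = measure_pmf.expectation ?M (\<lambda>x. h k x \<omega>)"
    unfolding P0_eq_walk_pmf[OF d] map_nth_walk_pmf[OF d k, symmetric] by simp
  also have "\<dots> = (\<Sum>x\<in>?V. h k x \<omega> * p0 d k x)"
    by (subst integral_measure_pmf[OF fV]) (auto simp: set_pmf_walk_pmf[OF d] p0_eq mult.commute)
  also have "\<dots> = (\<Sum>\<^sub>\<infinity>x\<in>?V. h k x \<omega> * p0 d k x)" using fV by simp
  also have "\<dots> = (\<Sum>\<^sub>\<infinity>x\<in>{x::int list. length x = d}. h k x \<omega> * p0 d k x)"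
  proof (rule infsum_cong_neutral)
    show "h k x \<omega> * p0 d k x = 0" if "x \<in> {x. length x = d} - ?V" for x
      using that set_M by (simp add: p0_eq pmf_eq_0_set_pmf)
    show "h k x \<omega> * p0 d k x = 0" if "x \<in> ?V - {x. length x = d}" for x
      using that length_walk_nth[of _ d k] by auto
  qed simp
  finally show ?thesis unfolding fk_def by (simp add: times_divide_eq_right[symmetric])
qed

lemma RN_eq_sum_walsh:
  assumes d: "d \<in> {1, 2}"
  shows "RN d c h N \<omega> = (\<Sum>(A, w)\<in>{A\<in>Pow {1..N}. 2 \<le> card A} \<times> walks d N.
      c N ^ card A / card (walks d N) * walsh h (visits A w) \<omega>)"
proof -
  let ?n = "real (card (walks d N))"
  have n0: "?n > 0" using finite_walks[OF d] by (auto simp: card_gt_0_iff)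
  define F where "F A = c N ^ card A * (\<Sum>w\<in>walks d N. walsh h (visits A w) \<omega>) / ?n" for A
  have "Zpart d c h N \<omega> = F {} + (\<Sum>k\<in>{1..N}. F {k}) + (\<Sum>A\<in>{A\<in>Pow {1..N}. 2 \<le> card A}. F A)"
    unfolding Zpart_eq_sum_walsh[OF d] F_def[symmetric] by (rule sum_Pow_atLeastAtMost_split)
  moreover have "F {} = 1" using n0 by (simp add: F_def visits_def walsh_def)
  moreover have "F {k} = fk d c h N k \<omega>" if "k \<in> {1..N}" for k
    using that by (simp add: F_def fk_eq_average[OF d] visits_def walsh_def)
  moreover have "(\<Sum>A\<in>{A\<in>Pow {1..N}. 2 \<le> card A}. F A) = (\<Sum>(A, w)\<in>{A\<in>Pow {1..N}. 2 \<le> card A} \<times> walks d N.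
      c N ^ card A / ?n * walsh h (visits A w) \<omega>)"
    by (simp add: F_def sum.cartesian_product[symmetric] sum_distrib_left sum_divide_distrib)
  ultimately show ?thesis by (simp add: RN_def)
qed

lemma collision_prob_eq_card:
  assumes d: "d \<in> {1, 2}"
  shows "collision_prob d N A =
    card {p \<in> walks d N \<times> walks d N. \<forall>n\<in>A. fst p ! n = snd p ! n} / (card (walks d N))\<^sup>2"
proof -
  have fw: "finite (walks d N)" "walks d N \<noteq> {}" using finite_walks[OF d] by auto
  have pair: "pair_pmf (P0 d N) (P0 d N) = pmf_of_set (walks d N \<times> walks d N)"
  proof (rule pmf_eqI)
    fix p :: "int list list \<times> int list list"
    show "pmf (pair_pmf (P0 d N) (P0 d N)) p = pmf (pmf_of_set (walks d N \<times> walks d N)) p"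
      using fw by (cases p) (simp add: P0_def pmf_pair indicator_def card_cartesian_product)
  qed
  have "collision_prob d N A =
      measure_pmf.prob (pmf_of_set (walks d N \<times> walks d N)) {p. \<forall>n\<in>A. fst p ! n = snd p ! n}"
    unfolding collision_prob_def P0_eq_walk_pmf[OF d, symmetric] pair ..
  also have "\<dots> = card {p \<in> walks d N \<times> walks d N. \<forall>n\<in>A. fst p ! n = snd p ! n} / card (walks d N \<times> walks d N)"
    using fw by (subst measure_pmf_of_set) (auto intro!: arg_cong[where f = card])
  finally show ?thesis by (simp add: card_cartesian_product power2_eq_square)
qed

lemma sum_agreeing_walks_eq:
  assumes d: "d \<in> {1, 2}"
  shows "(\<Sum>w\<in>walks d N. \<Sum>w'\<in>walks d N. if \<forall>n\<in>A. w ! n = w' ! n then 1 else 0) =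
    (real (card (walks d N)))\<^sup>2 * collision_prob d N A"
proof -
  have fw: "finite (walks d N)" "walks d N \<noteq> {}" using finite_walks[OF d] by auto
  have "real (card {p \<in> walks d N \<times> walks d N. \<forall>n\<in>A. fst p ! n = snd p ! n}) =
      (\<Sum>p\<in>walks d N \<times> walks d N. if \<forall>n\<in>A. fst p ! n = snd p ! n then 1 else 0)"
    using fw by (simp add: sum.inter_filter[symmetric])
  also have "\<dots> = (\<Sum>w\<in>walks d N. \<Sum>w'\<in>walks d N. if \<forall>n\<in>A. w ! n = w' ! n then 1 else 0)"
    by (simp add: sum.cartesian_product case_prod_unfold)
  finally show ?thesis using fw by (simp add: collision_prob_eq_card[OF d])
qed

lemma sum_coinciding_visits_eq:
  fixes f :: "nat set \<Rightarrow> real"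
  assumes d: "d \<in> {1, 2}" and fin: "finite \<A>"
  shows "(\<Sum>p\<in>\<A> \<times> walks d N. \<Sum>p'\<in>\<A> \<times> walks d N. f (fst p) * f (fst p') *
      (if visits (fst p) (snd p) = visits (fst p') (snd p') then 1 else 0)) =
    (\<Sum>A\<in>\<A>. (f A * card (walks d N))\<^sup>2 * collision_prob d N A)"
proof -
  let ?W = "walks d N" and ?agree = "\<lambda>A w w'. if \<forall>n\<in>A. w ! n = w' ! n then 1 else 0 :: real"
  have pairs: "(\<Sum>p\<in>\<A> \<times> ?W. g p) = (\<Sum>A\<in>\<A>. \<Sum>w\<in>?W. g (A, w))" for g :: "_ \<Rightarrow> real"
    by (simp add: sum.cartesian_product)
  have inner: "(\<Sum>B\<in>\<A>. \<Sum>w'\<in>?W. f A * f B * (if visits A w = visits B w' then 1 else 0)) =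
      (\<Sum>w'\<in>?W. (f A)\<^sup>2 * ?agree A w w')" if "A \<in> \<A>" for A w
  proof -
    have "(\<Sum>B\<in>\<A>. \<Sum>w'\<in>?W. f A * f B * (if visits A w = visits B w' then 1 else 0)) =
        (\<Sum>B\<in>\<A>. if A = B then \<Sum>w'\<in>?W. (f A)\<^sup>2 * ?agree A w w' else 0)"
      by (intro sum.cong refl) (auto simp: visits_eq_iff power2_eq_square)
    then show ?thesis using that fin by (simp add: sum.delta)
  qed
  have "(\<Sum>p\<in>\<A> \<times> ?W. \<Sum>p'\<in>\<A> \<times> ?W. f (fst p) * f (fst p') *
      (if visits (fst p) (snd p) = visits (fst p') (snd p') then 1 else 0)) =
      (\<Sum>A\<in>\<A>. (f A)\<^sup>2 * (\<Sum>w\<in>?W. \<Sum>w'\<in>?W. ?agree A w w'))"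
    unfolding pairs by (simp add: inner sum_distrib_left)
  also have "\<dots> = (\<Sum>A\<in>\<A>. (f A * card ?W)\<^sup>2 * collision_prob d N A)"
    by (simp add: sum_agreeing_walks_eq[OF d] power_mult_distrib mult.assoc)
  finally show ?thesis .
qed

context sign_environment
begin

lemma RN_square_integrable_integral:
  assumes d: "d \<in> {1, 2}"
  shows "RN d c h N \<in> borel_measurable Q" "integrable Q (\<lambda>\<omega>. (RN d c h N \<omega>)\<^sup>2)"
    "expectation (\<lambda>\<omega>. (RN d c h N \<omega>)\<^sup>2) =
       (\<Sum>A\<in>{A\<in>Pow {1..N}. 2 \<le> card A}. ((c N)\<^sup>2) ^ card A * collision_prob d N A)"
proof -
  let ?K = "{A\<in>Pow {1..N}. 2 \<le> card A} \<times> walks d N" and ?n = "real (card (walks d N))"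
  define f where "f A = c N ^ card A / ?n" for A :: "nat set"
  have fK: "finite ?K" using finite_walks[OF d] by simp
  have visits: "finite (visits (fst p) (snd p)) \<and> visits (fst p) (snd p) \<subseteq> sites" if "p \<in> ?K" for p
    using that finite_subset[of "fst p" "{1..N}"] length_walk_nth[of "snd p" d N]
    by (auto simp: visits_def)
  have RN: "RN d c h N = (\<lambda>\<omega>. \<Sum>p\<in>?K. f (fst p) * walsh h (visits (fst p) (snd p)) \<omega>)"
    by (rule ext) (simp add: RN_eq_sum_walsh[OF d] f_def case_prod_unfold)
  show "RN d c h N \<in> borel_measurable Q" unfolding RN by measurable
  show "integrable Q (\<lambda>\<omega>. (RN d c h N \<omega>)\<^sup>2)"
    unfolding RN by (rule walsh_sum_square_integrable_integral(1)[OF fK visits])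
  have "expectation (\<lambda>\<omega>. (RN d c h N \<omega>)\<^sup>2) = (\<Sum>p\<in>?K. \<Sum>p'\<in>?K. f (fst p) * f (fst p') *
      (if visits (fst p) (snd p) = visits (fst p') (snd p') then 1 else 0))"
    unfolding RN by (rule walsh_sum_square_integrable_integral(2)[OF fK visits])
  also have "\<dots> = (\<Sum>A\<in>{A\<in>Pow {1..N}. 2 \<le> card A}. (f A * ?n)\<^sup>2 * collision_prob d N A)"
    by (rule sum_coinciding_visits_eq[OF d]) simp
  also have "(\<lambda>A. (f A * ?n)\<^sup>2) = (\<lambda>A. ((c N)\<^sup>2) ^ card A)"
    using finite_walks[OF d] by (simp add: f_def card_gt_0_iff power_mult[symmetric] mult.commute)
  finally show "expectation (\<lambda>\<omega>. (RN d c h N \<omega>)\<^sup>2) =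
      (\<Sum>A\<in>{A\<in>Pow {1..N}. 2 \<le> card A}. ((c N)\<^sup>2) ^ card A * collision_prob d N A)" .
qed

end

section \<open>From mean-square convergence to weak convergence\<close>

lemma cdf_return_0: "cdf (return borel (0::real)) y = (if 0 \<le> y then 1 else 0)"
  unfolding cdf_def by (subst measure_return) (auto simp: indicator_def)

lemma isCont_cdf_return_0_iff: "isCont (cdf (return borel (0::real))) x \<longleftrightarrow> x \<noteq> 0"
proof -
  interpret real_distribution "return borel (0::real)"
    by (simp add: real_distribution_def real_distribution_axioms_def prob_space_return)
  show ?thesis by (simp add: isCont_cdf measure_return indicator_def)
qed

lemma (in prob_space) weak_conv_m_return_0_if_tendsto_in_prob:
  assumes meas: "\<And>N. f N \<in> borel_measurable M"
    and conv: "\<And>e. e > 0 \<Longrightarrow> (\<lambda>N. prob {\<omega> \<in> space M. e \<le> \<bar>f N \<omega>\<bar>}) \<longlonglongrightarrow> 0"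
  shows "weak_conv_m (\<lambda>N. distr M borel (f N)) (return borel 0)"
  unfolding weak_conv_m_def weak_conv_def
proof (intro allI impI)
  fix x :: real assume "isCont (cdf (return borel 0)) x"
  then have x0: "x \<noteq> 0" by (simp add: isCont_cdf_return_0_iff)
  have cdf_eq: "cdf (distr M borel (f N)) x = prob {\<omega> \<in> space M. f N \<omega> \<le> x}" for N
    unfolding cdf_def using meas[of N] by (subst measure_distr) (auto intro!: arg_cong[where f = prob])
  have events: "{\<omega> \<in> space M. P (f N \<omega>)} \<in> events" if "Measurable.pred borel P" for P N
    using meas[of N] that by measurable
  have small: "(\<lambda>N. prob {\<omega> \<in> space M. P (f N \<omega>)}) \<longlonglongrightarrow> 0"
    if P: "Measurable.pred borel P" and e: "e > 0" "\<And>y. P y \<Longrightarrow> e \<le> \<bar>y\<bar>" for P e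
  proof (rule tendsto_sandwich[OF _ _ tendsto_const conv[OF e(1)]])
    show "\<forall>\<^sub>F N in sequentially. prob {\<omega> \<in> space M. P (f N \<omega>)} \<le> prob {\<omega> \<in> space M. e \<le> \<bar>f N \<omega>\<bar>}"
      using e(2) by (intro always_eventually allI finite_measure_mono events) auto
  qed simp
  show "(\<lambda>N. cdf (distr M borel (f N)) x) \<longlonglongrightarrow> cdf (return borel 0) x"
  proof (cases "x < 0")
    case True
    have "(\<lambda>N. prob {\<omega> \<in> space M. f N \<omega> \<le> x}) \<longlonglongrightarrow> 0"
      using True by (intro small[of _ "- x"]) auto
    then show ?thesis using True by (simp add: cdf_eq cdf_return_0)
  next
    case False
    then have "x > 0" using x0 by simp
    then have "(\<lambda>N. prob {\<omega> \<in> space M. x < f N \<omega>}) \<longlonglongrightarrow> 0"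
      by (intro small[of _ x]) auto
    then have "(\<lambda>N. 1 - prob {\<omega> \<in> space M. x < f N \<omega>}) \<longlonglongrightarrow> 1"
      using tendsto_diff[OF tendsto_const] by fastforce
    moreover have "prob {\<omega> \<in> space M. f N \<omega> \<le> x} = 1 - prob {\<omega> \<in> space M. x < f N \<omega>}" for N
    proof -
      have "space M - {\<omega> \<in> space M. x < f N \<omega>} = {\<omega> \<in> space M. f N \<omega> \<le> x}" by auto
      then show ?thesis using prob_compl[OF events[of "\<lambda>y. x < y" N]] by simp
    qed
    ultimately show ?thesis using \<open>x > 0\<close> by (simp add: cdf_eq cdf_return_0)
  qed
qed

lemma (in prob_space) weak_conv_m_return_0_if_mean_square_tendsto_0:
  assumes meas: "\<And>N. f N \<in> borel_measurable M"
    and int: "\<And>N. integrable M (\<lambda>\<omega>. (f N \<omega>)\<^sup>2)"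
    and lim: "(\<lambda>N. expectation (\<lambda>\<omega>. (f N \<omega>)\<^sup>2)) \<longlonglongrightarrow> 0"
  shows "weak_conv_m (\<lambda>N. distr M borel (f N)) (return borel 0)"
proof (rule weak_conv_m_return_0_if_tendsto_in_prob[OF meas])
  fix e :: real assume e: "e > 0"
  have "(\<lambda>N. expectation (\<lambda>\<omega>. (f N \<omega>)\<^sup>2) / e\<^sup>2) \<longlonglongrightarrow> 0 / e\<^sup>2"
    by (intro tendsto_divide lim tendsto_const) (use e in simp)
  then have bound_lim: "(\<lambda>N. expectation (\<lambda>\<omega>. (f N \<omega>)\<^sup>2) / e\<^sup>2) \<longlonglongrightarrow> 0" by simp
  show "(\<lambda>N. prob {\<omega> \<in> space M. e \<le> \<bar>f N \<omega>\<bar>}) \<longlonglongrightarrow> 0"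
  proof (rule tendsto_sandwich[OF _ _ tendsto_const bound_lim])
    show "\<forall>\<^sub>F N in sequentially. prob {\<omega> \<in> space M. e \<le> \<bar>f N \<omega>\<bar>} \<le> expectation (\<lambda>\<omega>. (f N \<omega>)\<^sup>2) / e\<^sup>2"
      by (intro always_eventually allI second_moment_method[OF meas int e])
  qed simp
qed

lemma walk_rate_pos: "d \<in> {1, 2} \<Longrightarrow> N \<ge> 2 \<Longrightarrow> walk_rate d N > 0"
  by (auto simp: walk_rate_def)

lemma aN_square:
  assumes "(c N)\<^sup>2 * walk_rate d N > 0"
  shows "(aN d c N)\<^sup>2 = 1 / ((c N)\<^sup>2 * walk_rate d N)"
proof -
  let ?u = "(c N)\<^sup>2 * walk_rate d N"
  have "aN d c N = ?u powr (-1 / 2)" by (simp add: aN_def walk_rate_def)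
  then have "(aN d c N)\<^sup>2 = ?u powr (-1 / 2) * ?u powr (-1 / 2)" by (simp add: power2_eq_square)
  also have "\<dots> = ?u powr (-1)" by (simp add: powr_add[symmetric])
  finally show ?thesis using assms by (simp add: powr_minus_divide)
qed

context sign_environment
begin

lemma scaled_RN_mean_square_le:
  assumes d: "d \<in> {1, 2}" and N: "N \<ge> 2" and c: "c N > 0"
    and small: "6 * ((c N)\<^sup>2 * walk_rate d N) \<le> 1"
  shows "expectation (\<lambda>\<omega>. (aN d c N * RN d c h N \<omega>)\<^sup>2) \<le> 18 * ((c N)\<^sup>2 * walk_rate d N)"
proof -
  define u where "u = (c N)\<^sup>2 * walk_rate d N"
  define x where "x = (c N)\<^sup>2 * (\<Sum>a\<in>{1..N}. collision_prob d a {a})"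
  have u: "u > 0" using c walk_rate_pos[OF d N] by (simp add: u_def)
  have x0: "x \<ge> 0" by (simp add: x_def sum_nonneg collision_prob_nonneg)
  have xu: "x \<le> 3 * u"
    using mult_left_mono[OF sum_collision_prob_le[OF d N], of "(c N)\<^sup>2"] by (simp add: x_def u_def)
  then have x_half: "x \<le> 1 / 2" using small by (simp add: u_def)
  have "expectation (\<lambda>\<omega>. (RN d c h N \<omega>)\<^sup>2) \<le> x\<^sup>2 / (1 - x)"
    unfolding RN_square_integrable_integral(3)[OF d]
    using x_half by (intro collision_series_ge2_le[OF d _ x_def]) auto
  also have "\<dots> \<le> x\<^sup>2 / (1 / 2)" using x_half by (intro divide_left_mono) auto
  also have "\<dots> = 2 * x\<^sup>2" by simp
  also have "\<dots> \<le> 18 * u\<^sup>2" using x0 xu power_mono[OF xu x0, of 2] by simp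
  finally have RN_le: "expectation (\<lambda>\<omega>. (RN d c h N \<omega>)\<^sup>2) \<le> 18 * u\<^sup>2" .
  have "expectation (\<lambda>\<omega>. (aN d c N * RN d c h N \<omega>)\<^sup>2) = expectation (\<lambda>\<omega>. (RN d c h N \<omega>)\<^sup>2) / u"
    using aN_square[of c N d] u by (simp add: u_def power_mult_distrib)
  also have "\<dots> \<le> 18 * u\<^sup>2 / u" using RN_le u by (intro divide_right_mono) auto
  also have "\<dots> = 18 * u" using u by (simp add: power2_eq_square)
  finally show ?thesis by (simp add: u_def)
qed

end

theorem proposition31:
  fixes Q :: "'w measure" and h :: "nat \<Rightarrow> int list \<Rightarrow> 'w \<Rightarrow> real"
    and c :: "nat \<Rightarrow> real" and d :: nat
  assumes d: "d \<in> {1, 2}"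
    and Q: "prob_space Q"
    and h_meas: "\<And>n x. h n x \<in> borel_measurable Q"
    and h_indep: "prob_space.indep_vars Q (\<lambda>_. borel) (\<lambda>(n, x). h n x) {(n, x). length x = d}"
    and h_plus: "\<And>n x. length x = d \<Longrightarrow> measure Q {\<omega> \<in> space Q. h n x \<omega> = 1} = 1/2"
    and h_minus: "\<And>n x. length x = d \<Longrightarrow> measure Q {\<omega> \<in> space Q. h n x \<omega> = -1} = 1/2"
    and c_pos: "\<And>N. c N > 0"
    and c1: "d = 1 \<Longrightarrow> (\<lambda>N. (c N)\<^sup>2 * real N powr (1/2)) \<longlonglongrightarrow> 0"
    and c2: "d = 2 \<Longrightarrow> (\<lambda>N. (c N)\<^sup>2 * ln (real N)) \<longlonglongrightarrow> 0"
  shows "weak_conv_m (\<lambda>N. distr Q borel (\<lambda>\<omega>. aN d c N * RN d c h N \<omega>)) (return borel 0)"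
proof -
  interpret sign_environment Q h d
    using Q h_meas h_indep h_plus h_minus by (simp add: sign_environment_def sign_environment_axioms_def)
  define u where "u N = (c N)\<^sup>2 * walk_rate d N" for N
  have u: "u \<longlonglongrightarrow> 0" using d c1 c2 by (auto simp: u_def[abs_def] walk_rate_def)
  then have "\<forall>\<^sub>F N in sequentially. u N < 1 / 6" by (rule order_tendstoD) simp
  then have bound: "\<forall>\<^sub>F N in sequentially. expectation (\<lambda>\<omega>. (aN d c N * RN d c h N \<omega>)\<^sup>2) \<le> 18 * u N"
    using eventually_ge_at_top[of 2]
  proof eventually_elim
    case (elim N)
    then have "6 * ((c N)\<^sup>2 * walk_rate d N) \<le> 1" by (simp add: u_def)
    then show ?case using scaled_RN_mean_square_le[OF d elim(2) c_pos] by (simp add: u_def)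
  qed
  show ?thesis
  proof (rule weak_conv_m_return_0_if_mean_square_tendsto_0)
    show "(\<lambda>\<omega>. aN d c N * RN d c h N \<omega>) \<in> borel_measurable Q" for N
      using RN_square_integrable_integral(1)[OF d] by measurable
    show "integrable Q (\<lambda>\<omega>. (aN d c N * RN d c h N \<omega>)\<^sup>2)" for N
      using RN_square_integrable_integral(2)[OF d] by (simp add: power_mult_distrib)
    show "(\<lambda>N. expectation (\<lambda>\<omega>. (aN d c N * RN d c h N \<omega>)\<^sup>2)) \<longlonglongrightarrow> 0"
      using bound by (rule tendsto_sandwich[OF _ _ tendsto_const tendsto_mult_right_zero[OF u], rotated])
        (simp add: always_eventually)
  qed
qed

end
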